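(* Let $n\ge1$, let $r_{\max}(n):=\left\lfloor(\sqrt{1+8n}-1)/2\right\rfloor$, and let $C_n$ be an extreme point of the elliptope $\mathcal{E}_n$ with $\mathrm{rank}(C_n)=r_{\max}(n)$. Then $$\mathcal{D}(\mathbf{p}_{C_n})\ge\sqrt{2}^{\,\lfloor r_{\max}(n)/2\rfloor}.$$
   Context: $\mathcal{E}_n:=\{X\in\mathcal{S}^n_+: X_{ii}=1\ \forall i\}$ (real symmetric psd matrices with unit diagonal). For a matrix $C=(c_{xy})\in\mathcal{E}_n$ (which has entries in $[-1,1]$), $\mathbf{p}_C$ is the behavior in the $(n,n,2,2)$-scenario with outcomes $a,b\in\{\pm1\}$ given by $p_C(ab|xy)=\frac{1+ab\,c_{xy}}{4}$; it is a quantum behavior. A behavior $\mathbf{p}$ has a $d$-dimensional quantum representation if there exist a Hermitian psd trace-one $\rho$ on $\mathbb{C}^d\otimes\mathbb{C}^d$ and, for each $x$, Hermitian psd $d\times d$ matrices $\{M_{a|x}\}_a$ summing to $I_d$ and, for each $y$, Hermitian psd $d\times d$ matrices $\{N_{b|y}\}_b$ summing to $I_d$, with $p(ab|xy)=\mathrm{Tr}((M_{a|x}\otimes N_{b|y})\rho)$ for all $a,b,x,y$; $\mathcal{D}(\mathbf{p})$ is the least such $d$. *)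

theory Defs
  imports "HOL-Analysis.Analysis"
begin

definition real_psd :: "real^'n^'n \<Rightarrow> bool" where
  "real_psd X \<longleftrightarrow> transpose X = X \<and> (\<forall>v::real^'n. 0 \<le> v \<bullet> (X *v v))"

definition elliptope :: "(real^'n^'n) set" where
  "elliptope = {X. real_psd X \<and> (\<forall>i. X $ i $ i = 1)}"

definition r_max :: "nat \<Rightarrow> nat" where
  "r_max n = nat \<lfloor>(sqrt (1 + 8 * real n) - 1) / 2\<rfloor>"

definition outcomes :: "int set" where "outcomes = {-1, 1}"

text \<open>A behaviour is p a b x y = p(ab|xy).\<close>
definition p_C :: "real^'n^'n \<Rightarrow> int \<Rightarrow> int \<Rightarrow> 'n \<Rightarrow> 'n \<Rightarrow> real" where
  "p_C C a b x y = (1 + real_of_int (a * b) * C $ x $ y) / 4"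

type_synonym 'i cmat = "'i \<Rightarrow> 'i \<Rightarrow> complex"

definition hermitian_on :: "'i set \<Rightarrow> 'i cmat \<Rightarrow> bool" where
  "hermitian_on I M \<longleftrightarrow> (\<forall>i\<in>I. \<forall>j\<in>I. M j i = cnj (M i j))"

definition cpsd_on :: "'i set \<Rightarrow> 'i cmat \<Rightarrow> bool" where
  "cpsd_on I M \<longleftrightarrow> hermitian_on I M \<and>
     (\<forall>v::'i \<Rightarrow> complex. 0 \<le> Re (\<Sum>i\<in>I. \<Sum>j\<in>I. cnj (v i) * M i j * v j))"

definition ctrace_on :: "'i set \<Rightarrow> 'i cmat \<Rightarrow> complex" where
  "ctrace_on I M = (\<Sum>i\<in>I. M i i)"

definition cmult_on :: "'i set \<Rightarrow> 'i cmat \<Rightarrow> 'i cmat \<Rightarrow> 'i cmat" where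
  "cmult_on I A B = (\<lambda>i k. \<Sum>j\<in>I. A i j * B j k)"

definition cident :: "nat cmat" where
  "cident = (\<lambda>i j. if i = j then 1 else 0)"

text \<open>Matrices on C^d use indices {..<d}; matrices on C^d \<otimes> C^d use indices {..<d} \<times> {..<d}.\<close>
definition tensor :: "nat cmat \<Rightarrow> nat cmat \<Rightarrow> (nat \<times> nat) cmat" where
  "tensor M N = (\<lambda>(i, j) (k, l). M i k * N j l)"

definition is_povm :: "nat \<Rightarrow> (int \<Rightarrow> nat cmat) \<Rightarrow> bool" where
  "is_povm d M \<longleftrightarrow> (\<forall>a\<in>outcomes. cpsd_on {..<d} (M a)) \<and>
     (\<forall>i<d. \<forall>j<d. (\<Sum>a\<in>outcomes. M a i j) = cident i j)"

definition has_qrep :: "nat \<Rightarrow> (int \<Rightarrow> int \<Rightarrow> 'n \<Rightarrow> 'n \<Rightarrow> real) \<Rightarrow> bool" where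
  "has_qrep d p \<longleftrightarrow>
    (\<exists>(\<rho>::(nat \<times> nat) cmat) (M::'n \<Rightarrow> int \<Rightarrow> nat cmat) (N::'n \<Rightarrow> int \<Rightarrow> nat cmat).
       cpsd_on ({..<d} \<times> {..<d}) \<rho> \<and> ctrace_on ({..<d} \<times> {..<d}) \<rho> = 1 \<and>
       (\<forall>x. is_povm d (M x)) \<and> (\<forall>y. is_povm d (N y)) \<and>
       (\<forall>a\<in>outcomes. \<forall>b\<in>outcomes. \<forall>x y.
          complex_of_real (p a b x y) =
          ctrace_on ({..<d} \<times> {..<d})
            (cmult_on ({..<d} \<times> {..<d}) (tensor (M x a) (N y b)) \<rho>)))"

definition qdim :: "(int \<Rightarrow> int \<Rightarrow> 'n \<Rightarrow> 'n \<Rightarrow> real) \<Rightarrow> nat" where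
  "qdim p = (LEAST d. has_qrep d p)"

end

theory Submission
  imports Defs
begin

text \<open>
  Purifying \<open>\<rho>\<close> through a Gram
  factor gives a unit vector \<open>\<psi>\<close> in a space of dimension \<open>d\<^sup>4\<close>, and the observables \<open>A\<^sub>x = M\<^sub>1\<^sub>|\<^sub>x - M\<^sub>-\<^sub>1\<^sub>|\<^sub>x\<close>,
  \<open>B\<^sub>y = N\<^sub>1\<^sub>|\<^sub>y - N\<^sub>-\<^sub>1\<^sub>|\<^sub>y\<close> become commuting Hermitian contractions with \<open>\<langle>\<psi>, A\<^sub>x B\<^sub>y \<psi>\<rangle> = C\<^sub>x\<^sub>y\<close>.
  Since \<open>C\<^sub>x\<^sub>x = 1\<close>, \<open>A\<^sub>x \<psi> = B\<^sub>x \<psi>\<close>.  Since \<open>C\<close> is extreme, no non-zero symmetric matrix with zero diagonal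
  that vanishes on \<open>ker C\<close> can perturb it inside the elliptope; applied to the defects
  \<open>A\<^sub>x A\<^sub>y \<psi> - C\<^sub>x\<^sub>y \<psi>\<close>, this yields Tsirelson's relations \<open>(A\<^sub>x A\<^sub>y + A\<^sub>y A\<^sub>x) \<psi> = 2 C\<^sub>x\<^sub>y \<psi>\<close>.
  Combining the \<open>A\<^sub>x\<close> along a \<open>C\<close>-orthonormal basis of the range of \<open>C\<close> gives \<open>r = rank C\<close> observables
  that anticommute on \<open>\<psi>\<close>, and the vectors \<open>g\<^sub>S \<psi>\<close> for \<open>S \<subseteq> {0..<2\<lfloor>r/2\<rfloor>}\<close> are orthonormal.  Hence
  \<open>d\<^sup>4 \<ge> 4\<^bsup>\<lfloor>r/2\<rfloor>\<^esup>\<close>, i.e. \<open>d \<ge> \<surd>2\<^bsup>\<lfloor>r/2\<rfloor>\<^esup>\<close>.  The least dimension is attained because some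
  representation exists: Clifford matrices combined along Gram vectors of \<open>C\<close>, measured on a maximally
  entangled state.
\<close>

section \<open>Vectors and matrices on a finite index set\<close>

definition cinner :: "'j set \<Rightarrow> ('j \<Rightarrow> complex) \<Rightarrow> ('j \<Rightarrow> complex) \<Rightarrow> complex" where
  "cinner J v w = (\<Sum>j\<in>J. cnj (v j) * w j)"

definition capply :: "'j set \<Rightarrow> 'j cmat \<Rightarrow> ('j \<Rightarrow> complex) \<Rightarrow> ('j \<Rightarrow> complex)" where
  "capply J T v = (\<lambda>i. if i \<in> J then \<Sum>k\<in>J. T i k * v k else 0)"

definition vectors_on :: "'j set \<Rightarrow> ('j \<Rightarrow> complex) set" where
  "vectors_on J = {v. \<forall>j. j \<notin> J \<longrightarrow> v j = 0}"

lemma cinner_add_right: "cinner J v (\<lambda>j. w j + u j) = cinner J v w + cinner J v u"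
  by (simp add: cinner_def distrib_left sum.distrib)

lemma cinner_diff_right: "cinner J v (\<lambda>j. w j - u j) = cinner J v w - cinner J v u"
  unfolding cinner_def right_diff_distrib by (rule sum_subtractf)

lemma cinner_scale_right: "cinner J v (\<lambda>j. c * w j) = c * cinner J v w"
  by (simp add: cinner_def sum_distrib_left algebra_simps)

lemma cinner_diff_left: "cinner J (\<lambda>j. w j - u j) v = cinner J w v - cinner J u v"
  unfolding cinner_def complex_cnj_diff left_diff_distrib by (rule sum_subtractf)

lemma cinner_scale_left: "cinner J (\<lambda>j. c * w j) v = cnj c * cinner J w v"
  by (simp add: cinner_def sum_distrib_left algebra_simps)

lemma cinner_sum_right: "cinner J v (\<lambda>j. \<Sum>x\<in>X. f x j) = (\<Sum>x\<in>X. cinner J v (f x))"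
  unfolding cinner_def sum_distrib_left by (rule sum.swap)

lemma cinner_sum_left: "cinner J (\<lambda>j. \<Sum>x\<in>X. f x j) v = (\<Sum>x\<in>X. cinner J (f x) v)"
  unfolding cinner_def by (simp add: sum_distrib_right) (rule sum.swap)

lemma cnj_cinner: "cnj (cinner J v w) = cinner J w v"
  by (simp add: cinner_def mult.commute)

lemma cinner_cong:
  "(\<And>j. j \<in> J \<Longrightarrow> v j = v' j) \<Longrightarrow> (\<And>j. j \<in> J \<Longrightarrow> w j = w' j) \<Longrightarrow> cinner J v w = cinner J v' w'"
  by (simp add: cinner_def)

lemma cinner_self: "cinner J v v = complex_of_real (\<Sum>j\<in>J. (cmod (v j))\<^sup>2)"
  unfolding cinner_def of_real_sum
  by (rule sum.cong) (simp_all add: complex_norm_square[symmetric] mult.commute)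

lemma Re_cinner_self: "Re (cinner J v v) = (\<Sum>j\<in>J. (cmod (v j))\<^sup>2)"
  by (simp add: cinner_self)

lemma Re_cinner_self_nonneg: "0 \<le> Re (cinner J v v)"
  by (simp add: Re_cinner_self sum_nonneg)

lemma cinner_self_eq_Re: "cinner J v v = complex_of_real (Re (cinner J v v))"
  by (simp add: cinner_self)

lemma cinner_self_eq_zero:
  assumes "finite J" "v \<in> vectors_on J" "Re (cinner J v v) = 0"
  shows "v = (\<lambda>j. 0)"
proof
  fix j
  show "v j = 0"
  proof (cases "j \<in> J")
    case True
    have "\<forall>j\<in>J. (cmod (v j))\<^sup>2 = 0"
      using assms(1,3) by (subst sum_nonneg_eq_0_iff[symmetric]) (simp_all add: Re_cinner_self)
    then show ?thesis using True by simp
  next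
    case False then show ?thesis using assms(2) by (simp add: vectors_on_def)
  qed
qed

lemma eq_of_cinner_eq_1:
  assumes "finite J" "v \<in> vectors_on J" "w \<in> vectors_on J" "Re (cinner J v v) \<le> 1" "Re (cinner J w w) \<le> 1" "cinner J v w = 1"
  shows "v = w"
proof -
  have wv: "cinner J w v = 1" using assms(6) cnj_cinner[of J v w] by simp
  have "cinner J (\<lambda>j. v j - w j) (\<lambda>j. v j - w j) = cinner J v v - cinner J v w - (cinner J w v - cinner J w w)"
    by (simp add: cinner_diff_left cinner_diff_right)
  then have "Re (cinner J (\<lambda>j. v j - w j) (\<lambda>j. v j - w j)) = Re (cinner J v v) + Re (cinner J w w) - 2"
    using assms(6) wv by simp
  then have "Re (cinner J (\<lambda>j. v j - w j) (\<lambda>j. v j - w j)) = 0"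
    using assms(4,5) Re_cinner_self_nonneg[of J "\<lambda>j. v j - w j"] by linarith
  moreover have "(\<lambda>j. v j - w j) \<in> vectors_on J" using assms(2,3) by (simp add: vectors_on_def)
  ultimately have "(\<lambda>j. v j - w j) = (\<lambda>j. 0)" using cinner_self_eq_zero[OF assms(1)] by blast
  then show ?thesis by (metis (no_types) eq_iff_diff_eq_0 ext fun_cong)
qed

lemma cinner_Cauchy_Schwarz: "(cmod (cinner J v w))\<^sup>2 \<le> Re (cinner J v v) * Re (cinner J w w)"
proof -
  have "cmod (cinner J v w) \<le> (\<Sum>j\<in>J. cmod (v j) * cmod (w j))"
    unfolding cinner_def by (rule order_trans[OF norm_sum]) (simp add: norm_mult)
  then have "(cmod (cinner J v w))\<^sup>2 \<le> (\<Sum>j\<in>J. cmod (v j) * cmod (w j))\<^sup>2"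
    by (simp add: power_mono)
  also have "\<dots> \<le> (\<Sum>j\<in>J. (cmod (v j))\<^sup>2) * (\<Sum>j\<in>J. (cmod (w j))\<^sup>2)"
    by (rule Cauchy_Schwarz_ineq_sum)
  finally show ?thesis by (simp add: Re_cinner_self)
qed

lemma capply_vectors_on: "capply J T v \<in> vectors_on J"
  by (simp add: capply_def vectors_on_def)

lemma capply_add: "capply J T (\<lambda>j. v j + w j) = (\<lambda>j. capply J T v j + capply J T w j)"
  unfolding capply_def by (rule ext) (simp add: distrib_left sum.distrib)

lemma capply_scale: "capply J T (\<lambda>j. c * v j) = (\<lambda>j. c * capply J T v j)"
  by (auto simp add: capply_def sum_distrib_left algebra_simps)

lemma capply_outside: "p \<notin> J \<Longrightarrow> capply J T v p = 0"
  by (simp add: capply_def)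

lemma capply_zero [simp]: "capply J T (\<lambda>j. 0) = (\<lambda>j. 0)"
  by (auto simp add: capply_def)

lemma capply_sum: "capply J T (\<lambda>j. \<Sum>x\<in>X. f x j) = (\<lambda>j. \<Sum>x\<in>X. capply J T (f x) j)"
proof
  fix i show "capply J T (\<lambda>j. \<Sum>x\<in>X. f x j) i = (\<Sum>x\<in>X. capply J T (f x) i)"
    by (cases "i \<in> J") (simp_all add: capply_def sum_distrib_left, rule sum.swap)
qed

lemma cinner_capply_expand: "cinner J u (capply J M w) = (\<Sum>s\<in>J. \<Sum>t\<in>J. cnj (u s) * M s t * w t)"
  by (simp add: cinner_def capply_def sum_distrib_left mult.assoc)

lemma cinner_capply_hermitian:
  assumes "hermitian_on J T"
  shows "cinner J (capply J T v) w = cinner J v (capply J T w)"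
proof -
  have "cinner J (capply J T v) w = (\<Sum>i\<in>J. \<Sum>k\<in>J. cnj (T i k) * cnj (v k) * w i)"
    by (simp add: cinner_def capply_def sum_distrib_right)
  also have "\<dots> = (\<Sum>k\<in>J. \<Sum>i\<in>J. cnj (T i k) * cnj (v k) * w i)"
    by (rule sum.swap)
  also have "\<dots> = (\<Sum>k\<in>J. \<Sum>i\<in>J. cnj (v k) * T k i * w i)"
  proof (intro sum.cong refl)
    fix k i assume "k \<in> J" "i \<in> J"
    then have "T k i = cnj (T i k)" using assms unfolding hermitian_on_def by blast
    then show "cnj (T i k) * cnj (v k) * w i = cnj (v k) * T k i * w i" by simp
  qed
  also have "\<dots> = cinner J v (capply J T w)"
    by (rule cinner_capply_expand[symmetric])
  finally show ?thesis .
qed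

lemma card_orthonormal_le:
  assumes finJ: "finite J" and finP: "finite P"
    and orthonormal: "\<forall>p\<in>P. \<forall>q\<in>P. cinner J (v p) (v q) = (if p = q then 1 else 0)"
  shows "card P \<le> card J"
proof -
  have coordinate_bound: "(\<Sum>p\<in>P. (cmod (v p i))\<^sup>2) \<le> 1" if iJ: "i \<in> J" for i
  proof -
    define e where "e = (\<lambda>j. if j = i then (1::complex) else 0)"
    define s where "s = (\<lambda>j. \<Sum>p\<in>P. cnj (v p i) * v p j)"
    define Q where "Q = (\<Sum>p\<in>P. cnj (v p i) * v p i)"
    have "cinner J e w = (\<Sum>j\<in>J. if j = i then w j else 0)"
      and "cinner J w e = (\<Sum>j\<in>J. if j = i then cnj (w j) else 0)" for w
      unfolding cinner_def e_def by (auto intro: sum.cong)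
    then have "cinner J e w = w i" and "cinner J w e = cnj (w i)" for w
      using iJ finJ by simp_all
    then have ee: "cinner J e e = 1" and ev: "cinner J e (v p) = v p i"
      and ve: "cinner J (v p) e = cnj (v p i)" for p
      by (simp_all add: e_def)
    have es: "cinner J e s = Q"
      unfolding s_def cinner_sum_right by (simp add: cinner_scale_right ev Q_def)
    have se: "cinner J s e = Q"
      unfolding s_def cinner_sum_left cinner_scale_left ve complex_cnj_cnj by (simp add: Q_def mult.commute)
    have "cinner J s s = (\<Sum>p\<in>P. v p i * (\<Sum>q\<in>P. cnj (v q i) * cinner J (v p) (v q)))"
      unfolding s_def cinner_sum_left cinner_sum_right cinner_scale_left cinner_scale_right
      by (simp add: sum_distrib_left)
    also have "\<dots> = (\<Sum>p\<in>P. v p i * cnj (v p i))"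
    proof (intro sum.cong refl)
      fix p assume "p \<in> P"
      then have "(\<Sum>q\<in>P. cnj (v q i) * cinner J (v p) (v q)) = (\<Sum>q\<in>P. if q = p then cnj (v q i) else 0)"
        using orthonormal by (intro sum.cong) auto
      then show "v p i * (\<Sum>q\<in>P. cnj (v q i) * cinner J (v p) (v q)) = v p i * cnj (v p i)"
        using \<open>p \<in> P\<close> finP by simp
    qed
    finally have ss: "cinner J s s = Q" by (simp add: Q_def mult.commute)
    have "cinner J (\<lambda>j. e j - s j) (\<lambda>j. e j - s j) = 1 - Q"
      by (simp add: cinner_diff_left cinner_diff_right ee es se ss)
    then have "0 \<le> Re (1 - Q)" using Re_cinner_self_nonneg[of J "\<lambda>j. e j - s j"] by simp
    moreover have "Re Q = (\<Sum>p\<in>P. (cmod (v p i))\<^sup>2)"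
      unfolding Q_def Re_sum by (simp add: cmod_power2 flip: power2_eq_square)
    ultimately show ?thesis by simp
  qed
  have "real (card P) = (\<Sum>p\<in>P. Re (cinner J (v p) (v p)))" using orthonormal by simp
  also have "\<dots> = (\<Sum>i\<in>J. \<Sum>p\<in>P. (cmod (v p i))\<^sup>2)"
    unfolding Re_cinner_self by (rule sum.swap)
  also have "\<dots> \<le> (\<Sum>i\<in>J. 1)" using coordinate_bound by (intro sum_mono) auto
  finally show ?thesis by simp
qed

section \<open>Anticommuting observables and Clifford words\<close>

primrec apply_word :: "'j set \<Rightarrow> (nat \<Rightarrow> 'j cmat) \<Rightarrow> nat list \<Rightarrow> ('j \<Rightarrow> complex) \<Rightarrow> ('j \<Rightarrow> complex)" where
  "apply_word J g [] v = v"
| "apply_word J g (i # l) v = capply J (g i) (apply_word J g l v)"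

lemma apply_word_append: "apply_word J g (l1 @ l2) v = apply_word J g l1 (apply_word J g l2 v)"
  by (induction l1) auto

lemma apply_word_add:
  "apply_word J g l (\<lambda>j. v j + w j) = (\<lambda>j. apply_word J g l v j + apply_word J g l w j)"
  by (induction l) (auto simp: capply_add)

lemma apply_word_scale: "apply_word J g l (\<lambda>j. c * v j) = (\<lambda>j. c * apply_word J g l v j)"
  by (induction l) (auto simp: capply_scale)

lemma apply_word_snoc: "apply_word J g (l @ [i]) v = apply_word J g l (capply J (g i) v)"
  by (simp add: apply_word_append)

lemma cinner_apply_word_hermitian:
  assumes "\<And>i. hermitian_on J (g i)"
  shows "cinner J (apply_word J g l v) w = cinner J v (apply_word J g (rev l) w)"
proof (induction l arbitrary: w)
  case (Cons i l)
  have "cinner J (apply_word J g (i # l) v) w = cinner J (apply_word J g l v) (capply J (g i) w)"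
    by (simp add: cinner_capply_hermitian[OF assms])
  also have "\<dots> = cinner J v (apply_word J g (rev (i # l)) w)"
    by (simp add: Cons.IH apply_word_snoc)
  finally show ?case .
qed simp

lemma count_list_distinct: "distinct xs \<Longrightarrow> count_list xs k = (if k \<in> set xs then 1 else 0)"
  by (induction xs) auto

text \<open>Since \<open>g\<^sub>i\<close> may be traded for \<open>h\<^sub>i\<close> on \<open>\<psi>\<close>
  and the \<open>h\<^sub>i\<close> commute with every \<open>g\<^sub>k\<close>, the anticommutation relations propagate to all
  vectors obtained from \<open>\<psi>\<close> by words in the \<open>g\<^sub>i\<close>.\<close>

locale clifford_state =
  fixes J :: "'j set" and psi :: "'j \<Rightarrow> complex" and g h :: "nat \<Rightarrow> 'j cmat" and r :: nat
  assumes finite_J: "finite J"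
    and psi_unit: "cinner J psi psi = 1"
    and hermitian_g: "\<And>i. hermitian_on J (g i)" and hermitian_h: "\<And>i. hermitian_on J (h i)"
    and g_h_commute: "\<And>i k v. capply J (g i) (capply J (h k) v) = capply J (h k) (capply J (g i) v)"
    and g_psi_eq_h_psi: "\<And>i. capply J (g i) psi = capply J (h i) psi"
    and anticommute_psi: "\<And>i k. i < r \<Longrightarrow> k < r \<Longrightarrow>
       (\<lambda>j. capply J (g i) (capply J (g k) psi) j + capply J (g k) (capply J (g i) psi) j)
     = (\<lambda>j. (if i = k then 2 else 0) * psi j)"
begin

lemma g_commute_h_word: "capply J (g i) (apply_word J h l v) = apply_word J h l (capply J (g i) v)"
  by (induction l) (auto simp: g_h_commute)

lemma g_word_commute_h: "apply_word J g l (capply J (h k) v) = capply J (h k) (apply_word J g l v)"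
  by (induction l) (auto simp: g_h_commute)

lemma g_word_psi_eq_h_word: "apply_word J g l psi = apply_word J h (rev l) psi"
proof (induction l)
  case (Cons i l)
  have "apply_word J g (i # l) psi = capply J (g i) (apply_word J h (rev l) psi)"
    by (simp add: Cons.IH)
  also have "\<dots> = apply_word J h (rev (i # l)) psi"
    by (simp add: g_commute_h_word g_psi_eq_h_psi apply_word_snoc)
  finally show ?case .
qed simp

lemma anticommute_word:
  assumes "i < r" "k < r"
  shows "(\<lambda>j. capply J (g i) (capply J (g k) (apply_word J g l psi)) j
            + capply J (g k) (capply J (g i) (apply_word J g l psi)) j)
       = (\<lambda>j. (if i = k then 2 else 0) * apply_word J g l psi j)"
proof -
  have "(\<lambda>j. capply J (g i) (capply J (g k) (apply_word J g l psi)) j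
            + capply J (g k) (capply J (g i) (apply_word J g l psi)) j)
      = apply_word J h (rev l)
          (\<lambda>j. capply J (g i) (capply J (g k) psi) j + capply J (g k) (capply J (g i) psi) j)"
    by (simp add: g_word_psi_eq_h_word g_commute_h_word apply_word_add)
  also have "\<dots> = (\<lambda>j. (if i = k then 2 else 0) * apply_word J g l psi j)"
    by (simp add: anticommute_psi[OF assms] apply_word_scale g_word_psi_eq_h_word)
  finally show ?thesis .
qed

lemma g_square_word:
  assumes "i < r"
  shows "capply J (g i) (capply J (g i) (apply_word J g l psi)) = apply_word J g l psi"
proof
  fix j
  show "capply J (g i) (capply J (g i) (apply_word J g l psi)) j = apply_word J g l psi j"
    using fun_cong[OF anticommute_word[OF assms assms, of l], of j] by simp
qed

lemma anticommute_word_ne: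
  assumes "i < r" "k < r" "i \<noteq> k"
  shows "capply J (g i) (capply J (g k) (apply_word J g l psi))
       = (\<lambda>j. - capply J (g k) (capply J (g i) (apply_word J g l psi)) j)"
proof
  fix j
  show "capply J (g i) (capply J (g k) (apply_word J g l psi)) j
      = - capply J (g k) (capply J (g i) (apply_word J g l psi)) j"
    using fun_cong[OF anticommute_word[OF assms(1,2), of l], of j] assms(3)
    by (simp add: eq_neg_iff_add_eq_0)
qed

lemma h_square_psi:
  assumes "k < r" shows "capply J (h k) (capply J (h k) psi) = psi"
proof -
  have "capply J (h k) (capply J (h k) psi) = capply J (h k) (capply J (g k) psi)"
    by (simp only: g_psi_eq_h_psi)
  also have "\<dots> = capply J (g k) (capply J (h k) psi)"
    by (rule g_h_commute[symmetric])
  also have "\<dots> = capply J (g k) (capply J (g k) psi)"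
    by (simp only: g_psi_eq_h_psi)
  finally show ?thesis using g_square_word[OF assms, of "[]"] by simp
qed

text \<open>Moving \<open>g\<^sub>k\<close> through a word \<open>w\<close> costs one sign for every letter other than \<open>k\<close>.\<close>

lemma g_through_word:
  assumes "k < r" "set w \<subseteq> {..<r}"
  shows "capply J (g k) (apply_word J g w (apply_word J g l psi))
       = (\<lambda>j. (-1) ^ (length w + count_list w k) * apply_word J g w (capply J (g k) (apply_word J g l psi)) j)"
  using assms(2)
proof (induction w)
  case Nil then show ?case by simp
next
  case (Cons i w)
  let ?Y = "apply_word J g w (apply_word J g l psi)"
  let ?s = "(-1::complex) ^ (length w + count_list w k)"
  have IH: "capply J (g k) ?Y = (\<lambda>j. ?s * apply_word J g w (capply J (g k) (apply_word J g l psi)) j)"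
    using Cons by simp
  have Y: "?Y = apply_word J g (w @ l) psi" by (simp add: apply_word_append)
  have "i < r" using Cons.prems by simp
  have ss: "?s * ?s = 1" by (simp add: power_add[symmetric] mult_2[symmetric])
  show ?case
  proof (cases "i = k")
    case False
    have "capply J (g k) (capply J (g i) ?Y) = (\<lambda>j. - capply J (g i) (capply J (g k) ?Y) j)"
      using anticommute_word_ne[OF assms(1) \<open>i < r\<close>, of "w @ l"] False Y by simp
    then show ?thesis using False by (simp add: IH capply_scale)
  next
    case True
    have "apply_word J g w (capply J (g k) (apply_word J g l psi)) = (\<lambda>j. ?s * capply J (g k) ?Y j)"
      using IH ss by (simp add: fun_eq_iff mult.assoc[symmetric])
    then show ?thesis
      using True ss g_square_word[OF assms(1), of "w @ l"] Y
      by (simp add: capply_scale mult.assoc[symmetric])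
  qed
qed

text \<open>If \<open>g\<^sub>k\<close> anticommutes past \<open>w\<close>, then \<open>\<langle>\<psi>, w \<psi>\<rangle> = \<langle>g\<^sub>k \<psi>, w g\<^sub>k \<psi>\<rangle> = -\<langle>\<psi>, w \<psi>\<rangle>\<close>, where the first
  equality uses \<open>g\<^sub>k \<psi> = h\<^sub>k \<psi>\<close> and \<open>h\<^sub>k\<^sup>2 \<psi> = \<psi>\<close>.\<close>

lemma cinner_word_odd_eq_0:
  assumes k: "k < r" and w: "set w \<subseteq> {..<r}" and odd: "odd (length w + count_list w k)"
  shows "cinner J psi (apply_word J g w psi) = 0"
proof -
  let ?X = "capply J (g k) psi"
  have flip: "capply J (g k) (apply_word J g w ?X) = (\<lambda>j. - apply_word J g w psi j)"
    using g_through_word[OF k w, of "[k]"] g_square_word[OF k, of "[]"] odd by simp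
  have "cinner J psi (apply_word J g w psi) = - cinner J psi (capply J (g k) (apply_word J g w ?X))"
    by (simp add: flip cinner_scale_right[of J psi "-1", simplified])
  also have "cinner J psi (capply J (g k) (apply_word J g w ?X)) = cinner J ?X (apply_word J g w ?X)"
    by (simp only: cinner_capply_hermitian[OF hermitian_g])
  also have "\<dots> = cinner J (capply J (h k) psi) (capply J (h k) (apply_word J g w psi))"
    by (simp only: g_psi_eq_h_psi g_word_commute_h)
  also have "\<dots> = cinner J psi (apply_word J g w psi)"
    by (simp add: cinner_capply_hermitian[OF hermitian_h] g_word_commute_h[symmetric] h_square_psi[OF k])
  finally show ?thesis by simp
qed

lemma cinner_word_self:
  assumes "set l \<subseteq> {..<r}" shows "cinner J (apply_word J g l psi) (apply_word J g l psi) = 1"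
  using assms
proof (induction l)
  case (Cons i l)
  then have "i < r" by simp
  then show ?case
    using Cons by (simp add: cinner_capply_hermitian[OF hermitian_g] g_square_word)
qed (simp add: psi_unit)

definition subset_word :: "nat set \<Rightarrow> 'j \<Rightarrow> complex" where
  "subset_word S = apply_word J g (sorted_list_of_set S) psi"

text \<open>For \<open>S \<noteq> T\<close> some \<open>k < 2m\<close> makes \<open>|S| + |T| + [k \<in> S] + [k \<in> T]\<close> odd, which is the parity condition
  of the previous lemma for the word \<open>rev S @ T\<close>.\<close>

lemma subset_words_orthonormal:
  assumes m: "2 * m \<le> r" and S: "S \<subseteq> {..<2*m}" and T: "T \<subseteq> {..<2*m}"
  shows "cinner J (subset_word S) (subset_word T) = (if S = T then 1 else 0)"
proof -
  have finS: "finite S" and finT: "finite T" using S T finite_subset by auto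
  let ?lS = "sorted_list_of_set S" and ?lT = "sorted_list_of_set T"
  have setS: "set ?lS = S" and setT: "set ?lT = T" using finS finT by auto
  have lS: "set ?lS \<subseteq> {..<r}" and lT: "set ?lT \<subseteq> {..<r}" using setS setT S T m by auto
  show ?thesis
  proof (cases "S = T")
    case True then show ?thesis using cinner_word_self[OF lS] by (simp add: subset_word_def)
  next
    case False
    let ?w = "rev ?lS @ ?lT"
    have "count_list ?w k = (if k \<in> S then 1 else 0) + (if k \<in> T then 1 else 0)" for k
      using count_list_distinct[of ?lS k] count_list_distinct[of ?lT k] setS setT by simp
    moreover have "length ?w = card S + card T" by simp
    moreover obtain k where "k < 2 * m"
      and "odd (card S + card T + (if k \<in> S then 1 else 0) + (if k \<in> T then 1 else 0))"
    proof (cases "even (card S + card T)")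
      case True
      obtain k where "k \<in> S \<and> k \<notin> T \<or> k \<in> T \<and> k \<notin> S" using False by blast
      then show ?thesis using that True S T by auto
    next
      case odd: False
      have "\<exists>k<2*m. (k \<in> S) = (k \<in> T)"
      proof (rule ccontr)
        assume "\<not> ?thesis"
        then have "S \<inter> T = {}" "S \<union> T = {..<2*m}" using S T by auto
        then have "card S + card T = 2 * m" using card_Un_disjoint[OF finS finT] by simp
        then show False using odd by simp
      qed
      then obtain k where "k < 2 * m" "(k \<in> S) = (k \<in> T)" by blast
      then show ?thesis using that odd by auto
    qed
    ultimately have "cinner J psi (apply_word J g ?w psi) = 0"
      using cinner_word_odd_eq_0[of k ?w] lS lT m by (simp add: add.assoc)
    then show ?thesis
      using False by (simp add: subset_word_def cinner_apply_word_hermitian[OF hermitian_g] apply_word_append)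
  qed
qed

theorem four_pow_le_card:
  assumes "2 * m \<le> r" shows "4 ^ m \<le> card J"
proof -
  have "card (Pow {..<2*m}) \<le> card J"
    by (rule card_orthonormal_le[OF finite_J, of "Pow {..<2*m}" subset_word])
      (use subset_words_orthonormal[OF assms] in auto)
  then show ?thesis by (simp add: card_Pow power_mult)
qed

end

section \<open>Positive semidefinite real matrices and extreme points of the elliptope\<close>

lemma transpose_add: "transpose (A + B) = transpose A + transpose (B::real^'n^'n)"
  by (simp add: transpose_def vec_eq_iff)

lemma inner_matrix_symmetric:
  fixes C :: "real^'n^'n"
  assumes "transpose C = C" shows "u \<bullet> (C *v w) = (C *v u) \<bullet> w"
  by (metis assms dot_lmul_matrix transpose_matrix_vector)

lemma inner_matrix_vector_sum: "(c::real^'n) \<bullet> (C *v e) = (\<Sum>x\<in>UNIV. \<Sum>y\<in>UNIV. c$x * e$y * C$x$y)"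
  by (simp add: inner_vec_def matrix_vector_mult_def sum_distrib_left mult.commute mult.left_commute)

lemma quadratic_form_line:
  fixes C :: "real^'n^'n"
  shows "(w + t *\<^sub>R u) \<bullet> (C *v (w + t *\<^sub>R u)) =
    w \<bullet> (C *v w) + t * (w \<bullet> (C *v u)) + t * (u \<bullet> (C *v w)) + t\<^sup>2 * (u \<bullet> (C *v u))"
  by (simp add: matrix_vector_right_distrib matrix_vector_mult_scaleR inner_add_left inner_add_right
      power2_eq_square algebra_simps)

lemma real_psd_quadratic_eq_0:
  fixes C :: "real^'n^'n"
  assumes psd: "real_psd C" and z: "w \<bullet> (C *v w) = 0"
  shows "C *v w = 0"
proof -
  have sym: "transpose C = C" and pos: "\<And>v. 0 \<le> v \<bullet> (C *v v)" using psd by (auto simp: real_psd_def)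
  define u where "u = C *v w"
  define q where "q = u \<bullet> u"
  define b where "b = u \<bullet> (C *v u)"
  have b0: "0 \<le> b" using pos by (simp add: b_def)
  have e1: "w \<bullet> (C *v u) = q" unfolding q_def u_def using inner_matrix_symmetric[OF sym] by (metis inner_commute)
  have e2: "u \<bullet> (C *v w) = q" unfolding q_def u_def by simp
  define t where "t = - q / (b + 1)"
  have "0 \<le> (w + t *\<^sub>R u) \<bullet> (C *v (w + t *\<^sub>R u))" by (rule pos)
  also have "\<dots> = 2 * t * q + t\<^sup>2 * b" unfolding quadratic_form_line z e1 e2 b_def by simp
  finally have h: "0 \<le> 2 * t * q + t\<^sup>2 * b" .
  have "0 \<le> (2 * t * q + t\<^sup>2 * b) * (b + 1)\<^sup>2" using h b0 by simp
  also have "\<dots> = 2*q*(t*(b+1))*(b+1) + b*(t*(b+1))\<^sup>2" by (simp add: power2_eq_square algebra_simps)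
  also have "t*(b+1) = -q" using b0 unfolding t_def by simp
  also have "2*q*(-q)*(b+1) + b*(-q)\<^sup>2 = - q\<^sup>2 * (b + 2)" by (simp add: power2_eq_square algebra_simps)
  finally have "q\<^sup>2 * (b + 2) \<le> 0" by simp
  then have "q = 0" using b0 by (smt (verit) mult_pos_pos zero_less_power2)
  then show ?thesis unfolding q_def u_def by simp
qed

lemma real_psd_orthogonal_vector:
  fixes C :: "real^'n^'n"
  assumes "k < rank C" and cs: "\<forall>i<k. \<forall>j<k. cs i \<bullet> (C *v cs j) = (if i = j then 1 else 0)"
  shows "\<exists>w. C *v w \<noteq> 0 \<and> (\<forall>j<k. cs j \<bullet> (C *v w) = 0)"
proof -
  let ?V = "(\<lambda>i. C *v cs i) ` {..<k}"
  have "\<not> range (\<lambda>x. C *v x) \<subseteq> span ?V"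
  proof
    assume "range (\<lambda>x. C *v x) \<subseteq> span ?V"
    then have "dim (range (\<lambda>x. C *v x)) \<le> card ?V" by (intro dim_le_card) auto
    also have "\<dots> \<le> k" using card_image_le[of "{..<k}"] by simp
    finally show False using assms(1) by (simp add: rank_dim_range)
  qed
  then obtain v where v: "C *v v \<notin> span ?V" by auto
  define t where "t i = cs i \<bullet> (C *v v)" for i
  define w where "w = v - (\<Sum>i<k. t i *\<^sub>R cs i)"
  have Cw: "C *v w = C *v v - (\<Sum>i<k. t i *\<^sub>R (C *v cs i))"
    unfolding w_def by (simp add: matrix_vector_mult_diff_distrib linear_sum[OF
        matrix_vector_mul_linear] matrix_vector_mult_scaleR)
  have "(\<Sum>i<k. t i *\<^sub>R (C *v cs i)) \<in> span ?V"
    by (intro span_sum span_scale span_base) auto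
  then have "C *v w \<noteq> 0" using v unfolding Cw
    by (metis eq_iff_diff_eq_0 span_diff span_sum span_scale)
  moreover have "cs j \<bullet> (C *v w) = 0" if "j < k" for j
  proof -
    have "cs j \<bullet> (C *v w) = t j - (\<Sum>i<k. t i * (cs j \<bullet> (C *v cs i)))"
      unfolding Cw by (simp add: inner_diff_right inner_sum_right t_def)
    also have "(\<Sum>i<k. t i * (cs j \<bullet> (C *v cs i))) = (\<Sum>i<k. if i = j then t i else 0)"
      using cs that by (intro sum.cong) auto
    also have "\<dots> = t j" using that by simp
    finally show ?thesis by simp
  qed
  ultimately show ?thesis by blast
qed

text \<open>Gram--Schmidt for the semi-inner product \<open>(u, v) \<mapsto> u \<bullet> C v\<close>.\<close>

lemma real_psd_orthonormal_family:
  fixes C :: "real^'n^'n"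
  assumes psd: "real_psd C"
  shows "k \<le> rank C \<Longrightarrow> \<exists>cs. \<forall>i<k. \<forall>j<k. cs i \<bullet> (C *v cs j) = (if i = j then 1 else 0)"
proof (induction k)
  case 0 then show ?case by auto
next
  case (Suc k)
  have sym: "transpose C = C" and pos: "\<And>v. 0 \<le> v \<bullet> (C *v v)" using psd by (auto simp: real_psd_def)
  from Suc obtain cs where cs: "\<forall>i<k. \<forall>j<k. cs i \<bullet> (C *v cs j) = (if i = j then 1 else 0)" by auto
  obtain w where Cw0: "C *v w \<noteq> 0" and orth: "\<And>j. j < k \<Longrightarrow> cs j \<bullet> (C *v w) = 0"
    using real_psd_orthogonal_vector[OF _ cs] Suc.prems by auto
  define s where "s = w \<bullet> (C *v w)"
  have s0: "0 < s" using real_psd_quadratic_eq_0[OF psd, of w] pos[of w] Cw0 unfolding s_def by force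
  define cs' where "cs' = cs(k := (1 / sqrt s) *\<^sub>R w)"
  have "cs' i \<bullet> (C *v cs' j) = (if i = j then 1 else 0)" if "i < Suc k" "j < Suc k" for i j
  proof (cases "i = k"; cases "j = k")
    assume "i = k" "j = k" then show ?thesis
      using s0 by (simp add: cs'_def matrix_vector_mult_scaleR s_def[symmetric] real_sqrt_mult[symmetric])
  next
    assume "i = k" "j \<noteq> k"
    then have "j < k" using that by simp
    have "w \<bullet> (C *v cs j) = cs j \<bullet> (C *v w)" using inner_matrix_symmetric[OF sym] by (metis inner_commute)
    then show ?thesis using \<open>i = k\<close> \<open>j \<noteq> k\<close> orth[OF \<open>j < k\<close>] by (simp add: cs'_def)
  next
    assume "i \<noteq> k" "j = k"
    then have "i < k" using that by simp
    then show ?thesis using \<open>i \<noteq> k\<close> \<open>j = k\<close> orth[OF \<open>i < k\<close>]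
      by (simp add: cs'_def matrix_vector_mult_scaleR)
  next
    assume "i \<noteq> k" "j \<noteq> k"
    then show ?thesis using cs that by (simp add: cs'_def)
  qed
  then show ?case by blast
qed

lemma real_psd_range_expansion:
  fixes C :: "real^'n^'n"
  assumes cs: "\<forall>i<rank C. \<forall>j<rank C. cs i \<bullet> (C *v cs j) = (if i = j then 1 else 0)"
  shows "C *v v = (\<Sum>i<rank C. (cs i \<bullet> (C *v v)) *\<^sub>R (C *v cs i))"
proof -
  let ?r = "rank C"
  let ?V = "(\<lambda>i. C *v cs i) ` {..<?r}"
  have coeff: "cs j \<bullet> (\<Sum>i<?r. f i *\<^sub>R (C *v cs i)) = f j" if "j < ?r" for f j
  proof -
    have "cs j \<bullet> (\<Sum>i<?r. f i *\<^sub>R (C *v cs i)) = (\<Sum>i<?r. f i * (cs j \<bullet> (C *v cs i)))"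
      by (simp add: inner_sum_right)
    also have "\<dots> = (\<Sum>i<?r. if i = j then f i else 0)"
      using cs that by (intro sum.cong) auto
    finally show ?thesis using that by simp
  qed
  have inj: "inj_on (\<lambda>i. C *v cs i) {..<?r}"
    by (rule inj_onI) (metis cs lessThan_iff zero_neq_one)
  have indep: "independent ?V"
  proof (rule independent_if_scalars_zero)
    fix f x assume "(\<Sum>x\<in>?V. f x *\<^sub>R x) = 0" and "x \<in> ?V"
    then obtain j where "j < ?r" "x = C *v cs j" "(\<Sum>i<?r. f (C *v cs i) *\<^sub>R (C *v cs i)) = 0"
      by (auto simp: sum.reindex[OF inj])
    then show "f x = 0" using coeff[of j "\<lambda>i. f (C *v cs i)"] by simp
  qed simp
  have "card ?V = ?r" using card_image[OF inj] by simp
  then have "range (\<lambda>x. C *v x) \<subseteq> span ?V"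
    by (intro card_ge_dim_independent indep) (auto simp: rank_dim_range)
  then obtain mu where "C *v v = (\<Sum>x\<in>?V. mu x *\<^sub>R x)" by (auto simp: span_finite)
  then have mu: "C *v v = (\<Sum>i<?r. mu (C *v cs i) *\<^sub>R (C *v cs i))" by (simp add: sum.reindex[OF inj])
  show ?thesis
    by (subst (1 2) mu) (auto simp: coeff intro!: sum.cong)
qed

lemma elliptope_gram_vectors:
  fixes C :: "real^'n^'n"
  assumes "C \<in> elliptope"
  shows "\<exists>r u. \<forall>x y. C$x$y = (\<Sum>i<(r::nat). u x i * u y i)"
proof -
  have psd: "real_psd C" using assms by (simp add: elliptope_def)
  obtain cs where cs: "\<forall>i<rank C. \<forall>j<rank C. cs i \<bullet> (C *v cs j) = (if i = j then 1 else 0)"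
    using real_psd_orthonormal_family[OF psd, of "rank C"] by auto
  have "C$x$y = (\<Sum>i<rank C. (C *v cs i)$x * (C *v cs i)$y)" for x y
  proof -
    have "C$x$y = (C *v axis y 1)$x" by (simp add: matrix_vector_mult_basis column_def)
    also have "\<dots> = (\<Sum>i<rank C. (cs i \<bullet> (C *v axis y 1)) * (C *v cs i)$x)"
      by (subst real_psd_range_expansion[OF cs]) simp
    also have "\<dots> = (\<Sum>i<rank C. (C *v cs i)$x * (C *v cs i)$y)"
      using inner_matrix_symmetric[of C] psd by (simp add: real_psd_def inner_axis mult.commute)
    finally show ?thesis .
  qed
  then show ?thesis by (intro exI[of _ "rank C"] exI[of _ "\<lambda>x i. (C *v cs i)$x"]) simp
qed

lemma abs_bilinear_sum_le:
  fixes t :: "nat \<Rightarrow> real"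
  shows "\<bar>\<Sum>i<r. \<Sum>j<r. t i * t j * s i j\<bar> \<le> (\<Sum>i<r. \<Sum>j<r. \<bar>s i j\<bar>) * (\<Sum>k<r. (t k)\<^sup>2)"
proof -
  define Q where "Q = (\<Sum>k<r. (t k)\<^sup>2)"
  have tt: "\<bar>t i * t j\<bar> \<le> Q" if "i < r" "j < r" for i j
  proof -
    have "(t i)\<^sup>2 \<le> Q" "(t j)\<^sup>2 \<le> Q" unfolding Q_def
      using that by (auto intro!: member_le_sum)
    moreover have "\<bar>t i * t j\<bar> \<le> ((t i)\<^sup>2 + (t j)\<^sup>2) / 2"
    proof -
      have "0 \<le> (\<bar>t i\<bar> - \<bar>t j\<bar>)\<^sup>2" by simp
      then show ?thesis by (simp add: power2_diff abs_mult power2_abs)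
    qed
    moreover have "((t i)\<^sup>2 + (t j)\<^sup>2) / 2 \<le> Q" using calculation(1,2) by simp
    ultimately show ?thesis by (meson order_trans)
  qed
  have "\<bar>\<Sum>i<r. \<Sum>j<r. t i * t j * s i j\<bar> \<le> (\<Sum>i<r. \<Sum>j<r. \<bar>t i * t j * s i j\<bar>)"
    by (rule order_trans[OF sum_abs]) (intro sum_mono sum_abs)
  also have "\<dots> \<le> (\<Sum>i<r. \<Sum>j<r. Q * \<bar>s i j\<bar>)"
    using tt by (intro sum_mono) (auto simp: abs_mult intro: mult_right_mono)
  also have "\<dots> = (\<Sum>i<r. \<Sum>j<r. \<bar>s i j\<bar>) * Q" by (simp add: sum_distrib_left mult.commute)
  finally show ?thesis by (simp add: Q_def)
qed

text \<open>Expand both quadratic forms in a \<open>C\<close>-orthonormal basis of the range of \<open>C\<close>.\<close>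

lemma real_psd_dominates_symmetric:
  fixes C S :: "real^'n^'n"
  assumes psd: "real_psd C" and symS: "transpose S = S"
    and ker: "\<forall>c. C *v c = 0 \<longrightarrow> S *v c = 0"
  shows "\<exists>K\<ge>0. \<forall>v. \<bar>v \<bullet> (S *v v)\<bar> \<le> K * (v \<bullet> (C *v v))"
proof -
  have sym: "transpose C = C" using psd by (auto simp: real_psd_def)
  let ?r = "rank C"
  obtain cs where cs: "\<forall>i<?r. \<forall>j<?r. cs i \<bullet> (C *v cs j) = (if i = j then 1 else 0)"
    using real_psd_orthonormal_family[OF psd, of ?r] by auto
  define t where "t v i = cs i \<bullet> (C *v v)" for v i
  have Cv: "C *v v = (\<Sum>i<?r. t v i *\<^sub>R (C *v cs i))" for v
    using real_psd_range_expansion[OF cs] by (simp add: t_def)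
  have Sv: "S *v v = (\<Sum>i<?r. t v i *\<^sub>R (S *v cs i))" for v
  proof -
    have "C *v (v - (\<Sum>i<?r. t v i *\<^sub>R cs i)) = 0"
      by (simp add: matrix_vector_mult_diff_distrib linear_sum[OF matrix_vector_mul_linear]
          matrix_vector_mult_scaleR Cv[of v])
    then have "S *v (v - (\<Sum>i<?r. t v i *\<^sub>R cs i)) = 0" using ker by blast
    then show ?thesis
      by (simp add: matrix_vector_mult_diff_distrib linear_sum[OF matrix_vector_mul_linear]
          matrix_vector_mult_scaleR)
  qed
  have vCv: "v \<bullet> (C *v v) = (\<Sum>i<?r. (t v i)\<^sup>2)" for v
  proof -
    have "v \<bullet> (C *v v) = v \<bullet> (\<Sum>i<?r. t v i *\<^sub>R (C *v cs i))" by (simp only: Cv[of v])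
    also have "\<dots> = (\<Sum>i<?r. t v i * (v \<bullet> (C *v cs i)))"
      by (simp add: inner_sum_right)
    also have "\<dots> = (\<Sum>i<?r. t v i * t v i)"
      using inner_matrix_symmetric[OF sym] by (intro sum.cong) (auto simp: t_def inner_commute)
    finally show ?thesis by (simp add: power2_eq_square)
  qed
  have "\<bar>v \<bullet> (S *v v)\<bar> \<le> (\<Sum>i<?r. \<Sum>j<?r. \<bar>(S *v cs j) \<bullet> cs i\<bar>) * (v \<bullet> (C *v v))" for v
  proof -
    have "v \<bullet> (S *v v) = v \<bullet> (\<Sum>i<?r. t v i *\<^sub>R (S *v cs i))" by (simp only: Sv[of v])
    also have "\<dots> = (\<Sum>i<?r. t v i * (v \<bullet> (S *v cs i)))"
      by (simp add: inner_sum_right)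
    also have "\<dots> = (\<Sum>i<?r. t v i * ((S *v v) \<bullet> cs i))"
      using inner_matrix_symmetric[OF symS] by (intro sum.cong) (auto simp: inner_commute)
    also have "\<dots> = (\<Sum>i<?r. t v i * ((\<Sum>j<?r. t v j *\<^sub>R (S *v cs j)) \<bullet> cs i))"
      by (simp only: Sv[of v])
    also have "\<dots> = (\<Sum>i<?r. \<Sum>j<?r. t v i * t v j * ((S *v cs j) \<bullet> cs i))"
      by (simp add: inner_sum_left sum_distrib_left algebra_simps)
    finally show ?thesis
      using abs_bilinear_sum_le[of "t v" "\<lambda>i j. (S *v cs j) \<bullet> cs i" ?r] vCv[of v] by simp
  qed
  moreover have "0 \<le> (\<Sum>i<?r. \<Sum>j<?r. \<bar>(S *v cs j) \<bullet> cs i\<bar>)" by (intro sum_nonneg) auto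
  ultimately show ?thesis by blast
qed

lemma elliptope_add_dominated:
  fixes C S :: "real^'n^'n"
  assumes "C \<in> elliptope" and symS: "transpose S = S" and diag: "\<forall>i. S$i$i = 0"
    and "0 \<le> K" and dom: "\<And>v. \<bar>v \<bullet> (S *v v)\<bar> \<le> K * (v \<bullet> (C *v v))"
    and s: "\<bar>s\<bar> * K \<le> 1"
  shows "C + s *\<^sub>R S \<in> elliptope"
proof -
  have psd: "real_psd C" and dC: "\<forall>i. C$i$i = 1" using assms(1) by (auto simp: elliptope_def)
  have "0 \<le> v \<bullet> ((C + s *\<^sub>R S) *v v)" for v
  proof -
    have c0: "0 \<le> v \<bullet> (C *v v)" using psd by (simp add: real_psd_def)
    have "\<bar>s * (v \<bullet> (S *v v))\<bar> \<le> \<bar>s\<bar> * (K * (v \<bullet> (C *v v)))"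
      unfolding abs_mult using dom[of v] by (intro mult_left_mono) auto
    also have "\<dots> \<le> v \<bullet> (C *v v)"
      using mult_right_mono[OF s c0] by (simp add: mult.assoc)
    finally show ?thesis
      by (simp add: matrix_vector_mult_add_rdistrib scaleR_matrix_vector_assoc[symmetric] inner_add_right)
  qed
  moreover have "transpose (C + s *\<^sub>R S) = C + s *\<^sub>R S"
    using psd symS by (simp add: transpose_add transpose_scalar real_psd_def)
  ultimately show ?thesis using dC diag by (simp add: elliptope_def real_psd_def)
qed

text \<open>At an extreme point \<open>C\<close> of the elliptope, the only admissible perturbation direction is \<open>0\<close>:
  otherwise \<open>C \<pm> e S\<close> would both lie in the elliptope for small \<open>e > 0\<close>.\<close>

lemma extreme_point_elliptope_rigid:
  fixes C S :: "real^'n^'n"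
  assumes ext: "C extreme_point_of elliptope" and symS: "transpose S = S"
    and diag: "\<forall>i. S$i$i = 0" and ker: "\<forall>c. C *v c = 0 \<longrightarrow> S *v c = 0"
  shows "S = 0"
proof (rule ccontr)
  assume "S \<noteq> 0"
  have C: "C \<in> elliptope" using ext by (simp add: extreme_point_of_def)
  then have "real_psd C" by (simp add: elliptope_def)
  then obtain K where "0 \<le> K" and dom: "\<And>v. \<bar>v \<bullet> (S *v v)\<bar> \<le> K * (v \<bullet> (C *v v))"
    using real_psd_dominates_symmetric[OF _ symS ker] by blast
  define e where "e = 1 / (K + 1)"
  have "0 < e" "e * K \<le> 1" using \<open>0 \<le> K\<close> by (simp_all add: e_def field_simps)
  then have in_elliptope: "C + s *\<^sub>R S \<in> elliptope" if "s = e \<or> s = -e" for s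
    using that by (intro elliptope_add_dominated[OF C symS diag \<open>0 \<le> K\<close> dom]) auto
  have "C + (-e) *\<^sub>R S \<noteq> C + e *\<^sub>R S"
  proof
    assume "C + (-e) *\<^sub>R S = C + e *\<^sub>R S"
    then have "(2 * e) *\<^sub>R S = 0" by (simp add: algebra_simps scaleR_left_distrib[symmetric])
    then show False using \<open>S \<noteq> 0\<close> \<open>0 < e\<close> by simp
  qed
  moreover have "midpoint (C + (-e) *\<^sub>R S) (C + e *\<^sub>R S) = C"
  proof -
    have "(C + (-e) *\<^sub>R S) + (C + e *\<^sub>R S) = 2 *\<^sub>R C" by (simp add: scaleR_2)
    then show ?thesis by (simp add: midpoint_def)
  qed
  ultimately have "C \<in> open_segment (C + (-e) *\<^sub>R S) (C + e *\<^sub>R S)"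
    using midpoint_in_open_segment[of "C + (-e) *\<^sub>R S" "C + e *\<^sub>R S"] by metis
  then show False using ext in_elliptope[of e] in_elliptope[of "-e"] by (auto simp: extreme_point_of_def)
qed


section \<open>Operator models of extreme correlation matrices\<close>

definition op_lincomb :: "('n::finite \<Rightarrow> 'j \<Rightarrow> 'j \<Rightarrow> complex) \<Rightarrow> real^'n \<Rightarrow> 'j \<Rightarrow> 'j \<Rightarrow> complex" where
  "op_lincomb a c = (\<lambda>i k. \<Sum>x\<in>UNIV. complex_of_real (c$x) * a x i k)"

lemma capply_op_lincomb: "capply J (op_lincomb a c) v = (\<lambda>j. \<Sum>x\<in>UNIV. complex_of_real (c$x) * capply J (a x) v j)"
proof
  fix j show "capply J (op_lincomb a c) v j = (\<Sum>x\<in>UNIV. complex_of_real (c$x) * capply J (a x) v j)"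
    by (cases "j \<in> J") (simp_all add: capply_def op_lincomb_def sum_distrib_left sum_distrib_right mult.assoc,
        rule sum.swap)
qed

lemma capply_op_lincomb_twice: "capply J (op_lincomb a c) (capply J (op_lincomb b e) v) =
  (\<lambda>j. \<Sum>x\<in>UNIV. \<Sum>y\<in>UNIV. complex_of_real (c$x) * complex_of_real (e$y) * capply J (a x) (capply J (b y) v) j)"
proof -
  have "capply J (op_lincomb a c) (capply J (op_lincomb b e) v)
      = capply J (op_lincomb a c) (\<lambda>j. \<Sum>y\<in>UNIV. complex_of_real (e$y) * capply J (b y) v j)"
    by (simp only: capply_op_lincomb)
  also have "\<dots> = (\<lambda>j. \<Sum>y\<in>UNIV. capply J (op_lincomb a c) (\<lambda>j. complex_of_real (e$y) * capply J (b y) v j) j)"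
    by (rule capply_sum)
  also have "\<dots> = (\<lambda>j. \<Sum>y\<in>UNIV. complex_of_real (e$y) * capply J (op_lincomb a c) (capply J (b y) v) j)"
    by (simp only: capply_scale)
  also have "\<dots> = (\<lambda>j. \<Sum>y\<in>UNIV. complex_of_real (e$y) * (\<Sum>x\<in>UNIV. complex_of_real (c$x)
      * capply J (a x) (capply J (b y) v) j))"
    by (simp only: capply_op_lincomb)
  also have "\<dots> = (\<lambda>j. \<Sum>y\<in>UNIV. \<Sum>x\<in>UNIV. complex_of_real (c$x) * complex_of_real (e$y) * capply J (a x) (capply J (b y) v) j)"
    by (simp add: sum_distrib_left mult.left_commute mult.assoc)
  also have "\<dots> = (\<lambda>j. \<Sum>x\<in>UNIV. \<Sum>y\<in>UNIV. complex_of_real (c$x) * complex_of_real (e$y) * capply J (a x) (capply J (b y) v) j)"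
    by (intro ext) (rule sum.swap)
  finally show ?thesis .
qed

lemma hermitian_op_lincomb: assumes "\<And>x. hermitian_on J (a x)" shows "hermitian_on J (op_lincomb a c)"
  unfolding hermitian_on_def op_lincomb_def
proof (intro ballI)
  fix i k assume "i \<in> J" "k \<in> J"
  then have "\<And>x. a x k i = cnj (a x i k)" using assms unfolding hermitian_on_def by blast
  then show "(\<Sum>x\<in>UNIV. complex_of_real (c $ x) * a x k i) = cnj (\<Sum>x\<in>UNIV. complex_of_real (c $ x) * a x i k)"
    by (simp add: cnj_sum)
qed

locale operator_model =
  fixes J :: "'j set" and psi :: "'j \<Rightarrow> complex" and a b :: "'n::finite \<Rightarrow> 'j \<Rightarrow> 'j \<Rightarrow> complex"
    and C :: "real^'n^'n"
  assumes finite_J: "finite J"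
    and psi_vectors_on: "psi \<in> vectors_on J"
    and psi_unit: "cinner J psi psi = 1"
    and hermitian_a: "\<And>x. hermitian_on J (a x)" and hermitian_b: "\<And>x. hermitian_on J (b x)"
    and contraction_a: "\<And>x v. Re (cinner J (capply J (a x) v) (capply J (a x) v)) \<le> Re (cinner J v v)"
    and contraction_b: "\<And>x v. Re (cinner J (capply J (b x) v) (capply J (b x) v)) \<le> Re (cinner J v v)"
    and a_b_commute: "\<And>x y v. capply J (a x) (capply J (b y) v) = capply J (b y) (capply J (a x) v)"
    and correlation: "\<And>x y. complex_of_real (C$x$y) = cinner J psi (capply J (a x) (capply J (b y) psi))"
    and extreme_C: "C extreme_point_of elliptope"
begin

lemma C_in_elliptope: "C \<in> elliptope" using extreme_C by (simp add: extreme_point_of_def)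
lemma C_psd: "real_psd C" using C_in_elliptope by (simp add: elliptope_def)
lemma C_diag: "C$x$x = 1" using C_in_elliptope by (simp add: elliptope_def)
lemma C_sym: "C$y$x = C$x$y"
proof -
  have "transpose C = C" using C_psd by (simp add: real_psd_def)
  then show ?thesis by (metis transpose_def vec_lambda_beta)
qed

lemma a_psi_eq_b_psi: "capply J (a x) psi = capply J (b x) psi"
proof (rule eq_of_cinner_eq_1[OF finite_J])
  show "capply J (a x) psi \<in> vectors_on J" "capply J (b x) psi \<in> vectors_on J" by (rule capply_vectors_on)+
  show "Re (cinner J (capply J (a x) psi) (capply J (a x) psi)) \<le> 1" using contraction_a[of x psi] psi_unit by simp
  show "Re (cinner J (capply J (b x) psi) (capply J (b x) psi)) \<le> 1" using contraction_b[of x psi] psi_unit by simp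
  have "cinner J (capply J (a x) psi) (capply J (b x) psi) = cinner J psi (capply J (a x) (capply J (b x) psi))"
    by (simp add: cinner_capply_hermitian[OF hermitian_a])
  also have "\<dots> = 1" using correlation[of x x] C_diag by simp
  finally show "cinner J (capply J (a x) psi) (capply J (b x) psi) = 1" .
qed

lemma op_lincomb_a_psi_eq_b_psi: "capply J (op_lincomb a c) psi = capply J (op_lincomb b c) psi"
  by (simp add: capply_op_lincomb a_psi_eq_b_psi)

lemma op_lincomb_commute_b: "capply J (op_lincomb a c) (capply J (b y) v) = capply J (b y) (capply J (op_lincomb a c) v)"
  by (simp add: capply_op_lincomb capply_sum capply_scale a_b_commute)

lemma op_lincomb_a_commute_b: "capply J (op_lincomb a c) (capply J (op_lincomb b e) v)
    = capply J (op_lincomb b e) (capply J (op_lincomb a c) v)"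
proof -
  have "capply J (op_lincomb a c) (capply J (op_lincomb b e) v)
      = (\<lambda>j. \<Sum>x\<in>UNIV. \<Sum>y\<in>UNIV. complex_of_real (c$x) * complex_of_real (e$y)
      * capply J (a x) (capply J (b y) v) j)"
    by (rule capply_op_lincomb_twice)
  also have "\<dots> = (\<lambda>j. \<Sum>y\<in>UNIV. \<Sum>x\<in>UNIV. complex_of_real (c$x) * complex_of_real (e$y) * capply J (a x) (capply J (b y) v) j)"
    by (intro ext) (rule sum.swap)
  also have "\<dots> = (\<lambda>j. \<Sum>y\<in>UNIV. \<Sum>x\<in>UNIV. complex_of_real (e$y) * complex_of_real (c$x) * capply J (b y) (capply J (a x) v) j)"
    by (simp add: a_b_commute mult.commute)
  also have "\<dots> = capply J (op_lincomb b e) (capply J (op_lincomb a c) v)" by (rule capply_op_lincomb_twice[symmetric])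
  finally show ?thesis .
qed

lemma cinner_op_lincomb_correlation:
  "cinner J psi (capply J (op_lincomb a c) (capply J (op_lincomb b e) psi)) = complex_of_real (c \<bullet> (C *v e))"
proof -
  have "capply J (op_lincomb a c) (capply J (op_lincomb b e) psi)
      = (\<lambda>j. \<Sum>x\<in>UNIV. \<Sum>y\<in>UNIV. complex_of_real (c$x) * complex_of_real (e$y) * capply J (a x) (capply J (b y) psi) j)"
    by (rule capply_op_lincomb_twice)
  then have "cinner J psi (capply J (op_lincomb a c) (capply J (op_lincomb b e) psi))
      = (\<Sum>x\<in>UNIV. \<Sum>y\<in>UNIV. complex_of_real (c$x) * complex_of_real (e$y)
          * cinner J psi (capply J (a x) (capply J (b y) psi)))"
    by (simp add: cinner_sum_right cinner_scale_right)
  also have "\<dots> = (\<Sum>x\<in>UNIV. \<Sum>y\<in>UNIV. complex_of_real (c$x * e$y * C$x$y))"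
    by (simp add: correlation[symmetric])
  also have "\<dots> = complex_of_real (c \<bullet> (C *v e))" by (simp add: inner_matrix_vector_sum)
  finally show ?thesis .
qed

lemma cinner_op_lincomb_psi:
  "cinner J (capply J (op_lincomb a c) psi) (capply J (op_lincomb a e) psi) = complex_of_real (c \<bullet> (C *v e))"
proof -
  have "cinner J (capply J (op_lincomb a c) psi) (capply J (op_lincomb a e) psi)
      = cinner J (capply J (op_lincomb a c) psi) (capply J (op_lincomb b e) psi)"
    by (simp add: op_lincomb_a_psi_eq_b_psi)
  also have "\<dots> = cinner J psi (capply J (op_lincomb a c) (capply J (op_lincomb b e) psi))"
    by (simp add: cinner_capply_hermitian[OF hermitian_op_lincomb[OF hermitian_a]])
  finally show ?thesis by (simp add: cinner_op_lincomb_correlation)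
qed

lemma op_lincomb_kernel_psi: assumes "C *v c = 0" shows "capply J (op_lincomb a c) psi = (\<lambda>j. 0)"
proof -
  have "Re (cinner J (capply J (op_lincomb a c) psi) (capply J (op_lincomb a c) psi)) = 0"
      using cinner_op_lincomb_psi[of c c] assms by simp
  then show ?thesis using cinner_self_eq_zero[OF finite_J capply_vectors_on] by blast
qed

lemma a_square_psi: "capply J (a x) (capply J (a x) psi) = psi"
proof (rule eq_of_cinner_eq_1[OF finite_J])
  show "capply J (a x) (capply J (a x) psi) \<in> vectors_on J" by (rule capply_vectors_on)
  show "psi \<in> vectors_on J" by (rule psi_vectors_on)
  have n1: "cinner J (capply J (a x) psi) (capply J (a x) psi) = 1"
  proof -
    have "cinner J (capply J (a x) psi) (capply J (a x) psi) = cinner J (capply J (a x) psi) (capply J (b x) psi)"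
      by (simp add: a_psi_eq_b_psi)
    also have "\<dots> = cinner J psi (capply J (a x) (capply J (b x) psi))" by (simp add: cinner_capply_hermitian[OF hermitian_a])
    also have "\<dots> = 1" using correlation[of x x] C_diag by simp
    finally show ?thesis .
  qed
  show "Re (cinner J (capply J (a x) (capply J (a x) psi)) (capply J (a x) (capply J (a x) psi))) \<le> 1"
    using contraction_a[of x "capply J (a x) psi"] n1 by simp
  show "Re (cinner J psi psi) \<le> 1" using psi_unit by simp
  have "cinner J psi (capply J (a x) (capply J (a x) psi)) = 1" using n1
      by (simp add: cinner_capply_hermitian[OF hermitian_a])
  then show "cinner J (capply J (a x) (capply J (a x) psi)) psi = 1" using cnj_cinner by (metis complex_cnj_one)
qed

definition product_defect :: "'n \<Rightarrow> 'n \<Rightarrow> 'j \<Rightarrow> complex" where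
  "product_defect x y = (\<lambda>j. capply J (a x) (capply J (a y) psi) j - complex_of_real (C$x$y) * psi j)"

lemma product_defect_diag: "product_defect x x = (\<lambda>j. 0)"
  by (simp add: product_defect_def a_square_psi C_diag)

lemma product_defect_sum:
  "(\<Sum>y\<in>UNIV. complex_of_real (c$y) * product_defect x y j)
      = capply J (a x) (capply J (op_lincomb a c) psi) j - complex_of_real (\<Sum>y\<in>UNIV. C$x$y * c$y)
      * psi j"
  "(\<Sum>y\<in>UNIV. complex_of_real (c$y) * product_defect y x j)
      = capply J (op_lincomb a c) (capply J (a x) psi) j - complex_of_real (\<Sum>y\<in>UNIV. C$y$x * c$y)
      * psi j"
proof -
  have s1: "capply J (a x) (capply J (op_lincomb a c) psi) j = (\<Sum>y\<in>UNIV. complex_of_real (c$y)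
      * capply J (a x) (capply J (a y) psi) j)"
  proof -
    have "capply J (a x) (capply J (op_lincomb a c) psi)
        = capply J (a x) (\<lambda>j. \<Sum>y\<in>UNIV. complex_of_real (c$y) * capply J (a y) psi j)"
      by (simp only: capply_op_lincomb)
    also have "\<dots> = (\<lambda>j. \<Sum>y\<in>UNIV. complex_of_real (c$y) * capply J (a x) (capply J (a y) psi) j)"
      by (simp only: capply_sum capply_scale)
    finally show ?thesis by simp
  qed
  have s2: "capply J (op_lincomb a c) (capply J (a x) psi) j = (\<Sum>y\<in>UNIV. complex_of_real (c$y)
      * capply J (a y) (capply J (a x) psi) j)"
    by (simp only: capply_op_lincomb)
  have s3: "(\<Sum>y\<in>UNIV. complex_of_real (c$y) * (complex_of_real (C$x$y) * psi j))
      = complex_of_real (\<Sum>y\<in>UNIV. C$x$y * c$y) * psi j"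
    by (simp add: sum_distrib_left sum_distrib_right mult.commute mult.left_commute)
  have s4: "(\<Sum>y\<in>UNIV. complex_of_real (c$y) * (complex_of_real (C$y$x) * psi j))
      = complex_of_real (\<Sum>y\<in>UNIV. C$y$x * c$y) * psi j"
    by (simp add: sum_distrib_left sum_distrib_right mult.commute mult.left_commute)
  show "(\<Sum>y\<in>UNIV. complex_of_real (c$y) * product_defect x y j)
      = capply J (a x) (capply J (op_lincomb a c) psi) j - complex_of_real (\<Sum>y\<in>UNIV. C$x$y * c$y)
      * psi j"
    unfolding product_defect_def s1 s3[symmetric] by (simp add: right_diff_distrib sum_subtractf)
  show "(\<Sum>y\<in>UNIV. complex_of_real (c$y) * product_defect y x j)
      = capply J (op_lincomb a c) (capply J (a x) psi) j - complex_of_real (\<Sum>y\<in>UNIV. C$y$x * c$y)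
      * psi j"
    unfolding product_defect_def s2 s4[symmetric] by (simp add: right_diff_distrib sum_subtractf)
qed

lemma product_defect_kernel_left: assumes "C *v c = 0"
  shows "(\<Sum>y\<in>UNIV. complex_of_real (c$y) * product_defect x y j) = 0"
proof -
  have "(\<Sum>y\<in>UNIV. C$x$y * c$y) = (C *v c)$x" by (simp add: matrix_vector_mult_def)
  then show ?thesis using product_defect_sum(1)[of c x j] op_lincomb_kernel_psi[OF assms] assms by simp
qed

lemma product_defect_kernel_right: assumes "C *v c = 0"
  shows "(\<Sum>y\<in>UNIV. complex_of_real (c$y) * product_defect y x j) = 0"
proof -
  have "(\<Sum>y\<in>UNIV. C$y$x * c$y) = (C *v c)$x" by (simp add: matrix_vector_mult_def C_sym)
  moreover have "capply J (op_lincomb a c) (capply J (a x) psi) = capply J (b x) (capply J (op_lincomb a c) psi)"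
    by (simp add: a_psi_eq_b_psi op_lincomb_commute_b)
  ultimately show ?thesis using product_defect_sum(2)[of c x j] op_lincomb_kernel_psi[OF assms] assms by simp
qed

text \<open>The real and imaginary parts of the symmetric matrix \<open>K\<^sub>x\<^sub>y + K\<^sub>y\<^sub>x\<close> of defects have zero diagonal
  and vanish on the kernel of \<open>C\<close>, so they are zero at an extreme point.\<close>

lemma product_defect_antisym: "product_defect x y j + product_defect y x j = 0"
proof -
  define Z where "Z x y = product_defect x y j + product_defect y x j" for x y
  have Zk: "(\<Sum>y\<in>UNIV. complex_of_real (c$y) * Z x y) = 0" if "C *v c = 0" for c x
  proof -
    have "(\<Sum>y\<in>UNIV. complex_of_real (c$y) * Z x y) = (\<Sum>y\<in>UNIV. complex_of_real (c$y)
        * product_defect x y j) + (\<Sum>y\<in>UNIV. complex_of_real (c$y) * product_defect y x j)"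
      unfolding Z_def by (simp only: distrib_left sum.distrib)
    then show ?thesis using product_defect_kernel_left[OF that, of x j] product_defect_kernel_right[OF that, of x j] by simp
  qed
  define R where "R = (\<chi> x y. Re (Z x y))"
  define I where "I = (\<chi> x y. Im (Z x y))"
  have Zs: "Z x y = Z y x" for x y by (simp add: Z_def add.commute)
  have Zd: "Z x x = 0" for x by (simp add: Z_def product_defect_diag)
  have "R = 0"
  proof (rule extreme_point_elliptope_rigid[OF extreme_C])
    show "transpose R = R" by (simp add: R_def transpose_def vec_eq_iff Zs)
    show "\<forall>i. R $ i $ i = 0" by (simp add: R_def Zd)
    show "\<forall>c. C *v c = 0 \<longrightarrow> R *v c = 0"
    proof (intro allI impI)
      fix c :: "real^'n" assume c: "C *v c = 0"
      have "(R *v c)$x = Re (\<Sum>y\<in>UNIV. complex_of_real (c$y) * Z x y)" for x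
        by (simp add: R_def matrix_vector_mult_def Re_sum mult.commute)
      then show "R *v c = 0" using Zk[OF c] by (simp add: vec_eq_iff)
    qed
  qed
  moreover have "I = 0"
  proof (rule extreme_point_elliptope_rigid[OF extreme_C])
    show "transpose I = I" by (simp add: I_def transpose_def vec_eq_iff Zs)
    show "\<forall>i. I $ i $ i = 0" by (simp add: I_def Zd)
    show "\<forall>c. C *v c = 0 \<longrightarrow> I *v c = 0"
    proof (intro allI impI)
      fix c :: "real^'n" assume c: "C *v c = 0"
      have "(I *v c)$x = Im (\<Sum>y\<in>UNIV. complex_of_real (c$y) * Z x y)" for x
        by (simp add: I_def matrix_vector_mult_def Im_sum mult.commute)
      then show "I *v c = 0" using Zk[OF c] by (simp add: vec_eq_iff)
    qed
  qed
  ultimately have "Re (Z x y) = 0" "Im (Z x y) = 0"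
    by (metis R_def vec_lambda_beta zero_index, metis I_def vec_lambda_beta zero_index)
  then show ?thesis by (simp add: Z_def complex_eq_iff)
qed

lemma op_lincomb_anticommute:
  "(\<lambda>j. capply J (op_lincomb a c) (capply J (op_lincomb a e) psi) j
      + capply J (op_lincomb a e) (capply J (op_lincomb a c) psi) j)
   = (\<lambda>j. complex_of_real (2 * (c \<bullet> (C *v e))) * psi j)"
proof
  fix j
  have aa: "capply J (a x) (capply J (a y) psi) j = product_defect x y j + complex_of_real (C$x$y) * psi j" for x y
    by (simp add: product_defect_def)
  have "capply J (op_lincomb a c) (capply J (op_lincomb a e) psi) j
      + capply J (op_lincomb a e) (capply J (op_lincomb a c) psi) j
     = (\<Sum>x\<in>UNIV. \<Sum>y\<in>UNIV. complex_of_real (c$x) * complex_of_real (e$y) *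
          (capply J (a x) (capply J (a y) psi) j + capply J (a y) (capply J (a x) psi) j))"
  proof -
    have "capply J (op_lincomb a e) (capply J (op_lincomb a c) psi) j
        = (\<Sum>y\<in>UNIV. \<Sum>x\<in>UNIV. complex_of_real (e$y) * complex_of_real (c$x)
        * capply J (a y) (capply J (a x) psi) j)"
      by (simp only: capply_op_lincomb_twice)
    also have "\<dots> = (\<Sum>x\<in>UNIV. \<Sum>y\<in>UNIV. complex_of_real (c$x) * complex_of_real (e$y) * capply J (a y) (capply J (a x) psi) j)"
      by (subst sum.swap) (simp add: mult.commute)
    finally show ?thesis by (simp add: capply_op_lincomb_twice distrib_left sum.distrib)
  qed
  also have "\<dots> = (\<Sum>x\<in>UNIV. \<Sum>y\<in>UNIV. complex_of_real (c$x) * complex_of_real (e$y) *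
          (complex_of_real (2 * C$x$y) * psi j))"
  proof (intro sum.cong refl)
    fix x y
    have "capply J (a x) (capply J (a y) psi) j + capply J (a y) (capply J (a x) psi) j
        = (product_defect x y j + product_defect y x j) + complex_of_real (2 * C$x$y) * psi j"
      by (simp add: aa C_sym[of x y] algebra_simps)
    then show "complex_of_real (c$x) * complex_of_real (e$y) *
          (capply J (a x) (capply J (a y) psi) j + capply J (a y) (capply J (a x) psi) j)
        = complex_of_real (c$x) * complex_of_real (e$y) * (complex_of_real (2 * C$x$y) * psi j)"
      by (simp add: product_defect_antisym)
  qed
  also have "\<dots> = complex_of_real (2 * (c \<bullet> (C *v e))) * psi j"
    by (simp add: inner_matrix_vector_sum sum_distrib_left sum_distrib_right mult.commute mult.left_commute)
  finally show "capply J (op_lincomb a c) (capply J (op_lincomb a e) psi) j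
      + capply J (op_lincomb a e) (capply J (op_lincomb a c) psi) j
     = complex_of_real (2 * (c \<bullet> (C *v e))) * psi j" .
qed

text \<open>Along a \<open>C\<close>-orthonormal basis \<open>c\<^sub>0, \<dots>, c\<^sub>r\<^sub>-\<^sub>1\<close> of the range of \<open>C\<close>, the combinations
  \<open>\<Sum>\<^sub>x c\<^sub>i\<^sub>x a\<^sub>x\<close> anticommute on \<open>\<psi>\<close>, which is all that the Clifford-word argument needs.\<close>

theorem four_pow_rank_le_card: "4 ^ (rank C div 2) \<le> card J"
proof -
  obtain cs where cs: "\<forall>i<rank C. \<forall>j<rank C. cs i \<bullet> (C *v cs j) = (if i = j then 1 else 0)"
    using real_psd_orthonormal_family[OF C_psd, of "rank C"] by auto
  interpret cliff: clifford_state J psi "\<lambda>i. op_lincomb a (cs i)" "\<lambda>i. op_lincomb b (cs i)" "rank C"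
  proof
    show "finite J" "cinner J psi psi = 1" by (rule finite_J, rule psi_unit)
    show "hermitian_on J (op_lincomb a (cs i))" "hermitian_on J (op_lincomb b (cs i))" for i
      by (rule hermitian_op_lincomb, rule hermitian_a, rule hermitian_op_lincomb, rule hermitian_b)
    show "capply J (op_lincomb a (cs i)) (capply J (op_lincomb b (cs k)) v)
        = capply J (op_lincomb b (cs k)) (capply J (op_lincomb a (cs i)) v)" for i k v
      by (rule op_lincomb_a_commute_b)
    show "capply J (op_lincomb a (cs i)) psi = capply J (op_lincomb b (cs i)) psi" for i by (rule op_lincomb_a_psi_eq_b_psi)
    show "(\<lambda>j. capply J (op_lincomb a (cs i)) (capply J (op_lincomb a (cs k)) psi) j
        + capply J (op_lincomb a (cs k)) (capply J (op_lincomb a (cs i)) psi) j)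
       = (\<lambda>j. (if i = k then 2 else 0) * psi j)" if "i < rank C" "k < rank C" for i k
      using op_lincomb_anticommute[of "cs i" "cs k"] cs that by simp
  qed
  show ?thesis by (rule cliff.four_pow_le_card) simp
qed

end

section \<open>Positive semidefinite complex matrices\<close>

definition cquad :: "'i set \<Rightarrow> 'i cmat \<Rightarrow> ('i \<Rightarrow> complex) \<Rightarrow> complex" where
  "cquad I M v = (\<Sum>s\<in>I. \<Sum>t\<in>I. cnj (v s) * M s t * v t)"

lemma cpsd_on_cquad: "cpsd_on I M \<longleftrightarrow> hermitian_on I M \<and> (\<forall>v. 0 \<le> Re (cquad I M v))"
  by (simp add: cpsd_on_def cquad_def)

lemma mult_cnj_eq_cmod_square: "z * cnj z = (complex_of_real (cmod z))\<^sup>2"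
  by (metis complex_norm_square of_real_power)

lemma sum_two_elements:
  assumes "finite I" "a \<in> I" "t \<in> I" "a \<noteq> t" "\<forall>s\<in>I. s \<noteq> a \<and> s \<noteq> t \<longrightarrow> f s = 0"
  shows "sum f I = f a + f t"
proof -
  have "sum f I = sum f {a, t}"
    using assms by (intro sum.mono_neutral_cong_right) auto
  then show ?thesis using assms(4) by simp
qed

lemma cquad_two_points:
  assumes "finite I" "a \<in> I" "t \<in> I" "a \<noteq> t"
  shows "cquad I M (\<lambda>s. if s = a then x else if s = t then y else 0) =
    cnj x * M a a * x + cnj x * M a t * y + (cnj y * M t a * x + cnj y * M t t * y)"
proof -
  let ?v = "\<lambda>s. if s = a then x else if s = t then y else 0"
  have inner: "(\<Sum>u\<in>I. cnj (?v s) * M s u * ?v u) = cnj (?v s) * M s a * x + cnj (?v s) * M s t * y" for s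
    using assms by (subst sum_two_elements[of I a t]) auto
  show ?thesis unfolding cquad_def inner
    using assms by (subst sum_two_elements[of I a t]) auto
qed

text \<open>Otherwise the form would be negative at \<open>x e\<^sub>a + e\<^sub>t\<close> with \<open>x = -r M\<^sub>a\<^sub>t\<close> for large \<open>r\<close>.\<close>

lemma cpsd_on_zero_diag_row:
  assumes psd: "cpsd_on I M" and fin: "finite I" and a: "a \<in> I" and t: "t \<in> I" and z: "M a a = 0"
  shows "M a t = 0"
proof (rule ccontr)
  assume nz: "M a t \<noteq> 0"
  then have ta: "t \<noteq> a" using z by auto
  have herm: "M t a = cnj (M a t)" using psd a t unfolding cpsd_on_def hermitian_on_def by blast
  define q where "q = (cmod (M a t))\<^sup>2"
  have q0: "0 < q" using nz by (simp add: q_def)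
  define r where "r = (\<bar>Re (M t t)\<bar> + 1) / (2 * q)"
  define x where "x = - complex_of_real r * M a t"
  have "0 \<le> Re (cquad I M (\<lambda>s. if s = a then x else if s = t then 1 else 0))"
    using psd by (simp add: cpsd_on_cquad)
  also have "cquad I M (\<lambda>s. if s = a then x else if s = t then 1 else 0) =
      cnj x * M a t + M t a * x + M t t"
    using cquad_two_points[OF fin a t ta[symmetric], of M x 1] z by simp
  also have "cnj x * M a t + M t a * x = - complex_of_real (2 * r * q)"
    unfolding x_def herm q_def
    by (simp add: mult_cnj_eq_cmod_square mult.commute mult.left_commute)
  finally have "0 \<le> - 2 * r * q + Re (M t t)" by simp
  moreover have "2 * r * q = \<bar>Re (M t t)\<bar> + 1" using q0 by (simp add: r_def)
  ultimately show False by linarith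
qed

lemma cquad_restrict:
  assumes "finite I" "F \<subseteq> I"
  shows "cquad I M (\<lambda>s. if s \<in> F then v s else 0) = cquad F M v"
proof -
  have "cquad I M (\<lambda>s. if s \<in> F then v s else 0) = (\<Sum>s\<in>I. if s \<in> F then (\<Sum>t\<in>I. if t \<in> F then
      cnj (v s) * M s t * v t else 0) else 0)"
    unfolding cquad_def by (auto intro!: sum.cong)
  also have "\<dots> = (\<Sum>s\<in>F. (\<Sum>t\<in>I. if t \<in> F then cnj (v s) * M s t * v t else 0))"
    using assms by (simp add: sum.If_cases Int_absorb1)
  also have "\<dots> = cquad F M v"
    unfolding cquad_def using assms by (simp add: sum.If_cases Int_absorb1)
  finally show ?thesis .
qed

lemma cpsd_on_subset:
  assumes "cpsd_on I M" "finite I" "F \<subseteq> I" shows "cpsd_on F M"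
  unfolding cpsd_on_cquad
proof
  show "hermitian_on F M" using assms unfolding cpsd_on_def hermitian_on_def by blast
  show "\<forall>v. 0 \<le> Re (cquad F M v)"
    using assms cquad_restrict[OF assms(2,3)] unfolding cpsd_on_cquad by metis
qed

lemma cquad_insert:
  assumes "finite F" "a \<notin> F"
  shows "cquad (insert a F) M v = cnj (v a) * M a a * v a + (\<Sum>t\<in>F. cnj (v a) * M a t * v t)
      + (\<Sum>s\<in>F. cnj (v s) * M s a * v a) + cquad F M v"
  using assms by (simp add: cquad_def sum.distrib algebra_simps)

lemma gram_factor_insert_zero_row:
  assumes "finite F" "a \<notin> F" and row: "\<And>t. t \<in> insert a F \<Longrightarrow> M a t = 0 \<and> M t a = 0"
    and W': "\<forall>s\<in>F. \<forall>t\<in>F. M s t = (\<Sum>k\<in>F. W' s k * cnj (W' t k))"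
  shows "\<exists>W. \<forall>s\<in>insert a F. \<forall>t\<in>insert a F. M s t = (\<Sum>k\<in>insert a F. W s k * cnj (W t k))"
proof -
  define W where "W s k = (if s = a \<or> k = a then 0 else W' s k)" for s k
  have "M s t = (\<Sum>k\<in>insert a F. W s k * cnj (W t k))" if "s \<in> insert a F" "t \<in> insert a F" for s t
  proof (cases "s = a \<or> t = a")
    case True
    then have "M s t = 0" using row that by blast
    moreover have "(\<Sum>k\<in>insert a F. W s k * cnj (W t k)) = 0"
      using True by (intro sum.neutral) (auto simp: W_def)
    ultimately show ?thesis by simp
  next
    case False
    then have "s \<in> F" "t \<in> F" using that by auto
    moreover have "(\<Sum>k\<in>insert a F. W s k * cnj (W t k)) = (\<Sum>k\<in>F. W' s k * cnj (W' t k))"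
      using False assms(1,2) by (simp add: W_def) (intro sum.cong, auto)
    ultimately show ?thesis using W' by simp
  qed
  then show ?thesis by blast
qed

lemma hermitian_on_diag_real:
  assumes "hermitian_on I M" "a \<in> I" shows "M a a = complex_of_real (Re (M a a))"
proof -
  have "M a a = cnj (M a a)" using assms unfolding hermitian_on_def by blast
  then show ?thesis by (simp add: complex_eq_iff)
qed

lemma hermitian_on_schur_complement:
  assumes herm: "hermitian_on (insert a F) M"
  shows "hermitian_on F (\<lambda>s t. M s t - M s a * M a t / M a a)"
  unfolding hermitian_on_def
proof (intro ballI)
  fix s t assume "s \<in> F" "t \<in> F"
  then have "M t s = cnj (M s t)" "M t a = cnj (M a t)" "M a s = cnj (M s a)"
    using herm unfolding hermitian_on_def by blast+
  moreover have "cnj (M a a) = M a a"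
    using hermitian_on_diag_real[OF herm] by (metis complex_cnj_complex_of_real insertI1)
  ultimately show "M t s - M t a * M a s / M a a = cnj (M s t - M s a * M a t / M a a)"
    by (simp add: mult.commute)
qed

text \<open>Choosing the \<open>a\<close>-coordinate optimally turns the form of \<open>M\<close> into that of the Schur complement.\<close>

lemma cquad_schur_complement:
  assumes "finite F" "a \<notin> F" and herm: "hermitian_on (insert a F) M" and p: "M a a \<noteq> 0"
  shows "cquad F (\<lambda>s t. M s t - M s a * M a t / M a a) v
    = cquad (insert a F) M (v(a := - (\<Sum>t\<in>F. M a t * v t) / M a a))"
proof -
  define p where "p = M a a"
  define pr where "pr = Re p"
  have preal: "p = complex_of_real pr"
    using hermitian_on_diag_real[OF herm] unfolding p_def pr_def by simp
  have "pr \<noteq> 0" using p preal p_def by (metis of_real_0)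
  define beta where "beta = (\<Sum>t\<in>F. M a t * v t)"
  define v' where "v' = v(a := - beta / p)"
  have cb: "(\<Sum>s\<in>F. cnj (v s) * M s a) = cnj beta"
    unfolding beta_def cnj_sum
  proof (rule sum.cong[OF refl])
    fix s assume "s \<in> F"
    then have "M s a = cnj (M a s)" using herm \<open>s \<in> F\<close> unfolding hermitian_on_def by blast
    then show "cnj (v s) * M s a = cnj (M a s * v s)" by (simp add: mult.commute)
  qed
  have v'F: "\<And>s. s \<in> F \<Longrightarrow> v' s = v s" using assms(2) by (auto simp: v'_def)
  have "cquad (insert a F) M v' = cnj (v' a) * p * v' a + (\<Sum>t\<in>F. cnj (v' a) * M a t * v' t)
      + (\<Sum>s\<in>F. cnj (v' s) * M s a * v' a) + cquad F M v'"
    using cquad_insert[OF assms(1,2)] p_def by simp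
  also have "cquad F M v' = cquad F M v" unfolding cquad_def using v'F by (intro sum.cong) auto
  also have "(\<Sum>t\<in>F. cnj (v' a) * M a t * v' t) = cnj (v' a) * beta"
    unfolding beta_def sum_distrib_left using v'F by (intro sum.cong) (auto simp: mult.assoc)
  also have "(\<Sum>s\<in>F. cnj (v' s) * M s a * v' a) = cnj beta * v' a"
    unfolding cb[symmetric] sum_distrib_right using v'F by (intro sum.cong) auto
  also have "v' a = - beta / p" by (simp add: v'_def)
  finally have e1: "cquad (insert a F) M v' = cquad F M v - cnj beta * beta / p"
    using \<open>pr \<noteq> 0\<close> preal by (simp add: field_simps)
  have "cquad F (\<lambda>s t. M s t - M s a * M a t / M a a) v
      = cquad F M v - (\<Sum>s\<in>F. \<Sum>t\<in>F. cnj (v s) * M s a * (M a t * v t)) / p"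
    unfolding cquad_def p_def by (simp add: sum_subtractf sum_divide_distrib algebra_simps)
  also have "(\<Sum>s\<in>F. \<Sum>t\<in>F. cnj (v s) * M s a * (M a t * v t))
      = (\<Sum>s\<in>F. cnj (v s) * M s a) * (\<Sum>t\<in>F. M a t * v t)"
    by (simp add: sum_product)
  finally show ?thesis using e1 cb by (simp add: v'_def beta_def p_def)
qed

lemma cpsd_on_schur_complement:
  assumes psd: "cpsd_on (insert a F) M" and "finite F" "a \<notin> F" and "M a a \<noteq> 0"
  shows "cpsd_on F (\<lambda>s t. M s t - M s a * M a t / M a a)"
proof -
  have herm: "hermitian_on (insert a F) M" using psd by (simp add: cpsd_on_def)
  show ?thesis
    unfolding cpsd_on_cquad cquad_schur_complement[OF assms(2,3) herm assms(4)]
    using hermitian_on_schur_complement[OF herm] psd by (simp add: cpsd_on_cquad)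
qed

text \<open>One step of the Cholesky factorisation: a factor of the Schur complement, extended by the
  column \<open>M s a / \<surd>(M a a)\<close>, factors \<open>M\<close>.\<close>

lemma gram_factor_insert_pivot:
  assumes "finite F" "a \<notin> F" and herm: "hermitian_on (insert a F) M"
    and pos: "M a a = complex_of_real pr" "0 < pr"
    and W': "\<forall>s\<in>F. \<forall>t\<in>F. M s t - M s a * M a t / M a a = (\<Sum>k\<in>F. W' s k * cnj (W' t k))"
  shows "\<exists>W. \<forall>s\<in>insert a F. \<forall>t\<in>insert a F. M s t = (\<Sum>k\<in>insert a F. W s k * cnj (W t k))"
proof -
  let ?I = "insert a F"
  define c where "c s = M s a / complex_of_real (sqrt pr)" for s
  define W where "W s k = (if k = a then c s else if s = a then 0 else W' s k)" for s k
  have cc: "c s * cnj (c t) = M s a * M a t / M a a" if "t \<in> ?I" for s t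
  proof -
    have "M t a = cnj (M a t)" using herm that unfolding hermitian_on_def by blast
    moreover have "complex_of_real (sqrt pr) * complex_of_real (sqrt pr) = complex_of_real pr"
      using pos by (simp flip: of_real_mult)
    ultimately show ?thesis using pos by (simp add: c_def field_simps)
  qed
  have "M s t = (\<Sum>k\<in>?I. W s k * cnj (W t k))" if st: "s \<in> ?I" "t \<in> ?I" for s t
  proof -
    have sumI: "(\<Sum>k\<in>?I. W s k * cnj (W t k)) = c s * cnj (c t) + (\<Sum>k\<in>F. W s k * cnj (W t k))"
      using assms(1,2) by (simp add: W_def)
    show ?thesis
    proof (cases "s = a \<or> t = a")
      case True
      have "(\<Sum>k\<in>F. W s k * cnj (W t k)) = 0"
        using True assms(2) by (intro sum.neutral) (auto simp: W_def)
      then show ?thesis using True sumI cc[OF st(2)] pos by (auto simp: field_simps)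
    next
      case False
      then have "s \<in> F" "t \<in> F" using st by auto
      have "(\<Sum>k\<in>F. W s k * cnj (W t k)) = (\<Sum>k\<in>F. W' s k * cnj (W' t k))"
        using False assms(2) by (intro sum.cong) (auto simp: W_def)
      also have "\<dots> = M s t - M s a * M a t / M a a" using W' \<open>s \<in> F\<close> \<open>t \<in> F\<close> by simp
      finally show ?thesis using sumI cc[OF st(2)] by simp
    qed
  qed
  then show ?thesis by blast
qed

lemma cpsd_on_gram_factor:
  assumes "finite I" "cpsd_on I M"
  shows "\<exists>W. \<forall>s\<in>I. \<forall>t\<in>I. M s t = (\<Sum>k\<in>I. W s k * cnj (W t k))"
  using assms
proof (induction I arbitrary: M rule: finite_induct)
  case empty then show ?case by simp
next
  case (insert a F)
  have psd: "cpsd_on (insert a F) M" by fact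
  have finI: "finite (insert a F)" using insert by simp
  have herm: "hermitian_on (insert a F) M" using psd by (simp add: cpsd_on_def)
  have preal: "M a a = complex_of_real (Re (M a a))" using hermitian_on_diag_real[OF herm] by simp
  show ?case
  proof (cases "M a a = 0")
    case True
    have "M a t = 0 \<and> M t a = 0" if "t \<in> insert a F" for t
    proof -
      have "M a t = 0" using cpsd_on_zero_diag_row[OF psd finI _ that True] by simp
      moreover have "M t a = cnj (M a t)" using herm that unfolding hermitian_on_def by blast
      ultimately show ?thesis by simp
    qed
    moreover obtain W' where "\<forall>s\<in>F. \<forall>t\<in>F. M s t = (\<Sum>k\<in>F. W' s k * cnj (W' t k))"
      using insert.IH cpsd_on_subset[OF psd finI] by blast
    ultimately show ?thesis using gram_factor_insert_zero_row[OF insert.hyps] by blast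
  next
    case False
    have "0 \<le> Re (cquad (insert a F) M (\<lambda>s. if s \<in> {a} then 1 else 0))"
      using psd by (simp add: cpsd_on_cquad)
    then have "0 \<le> Re (cquad {a} M (\<lambda>s. 1))"
      using cquad_restrict[OF finI, of "{a}" M "\<lambda>s. 1"] by simp
    then have "0 \<le> Re (M a a)" by (simp add: cquad_def)
    moreover have "Re (M a a) \<noteq> 0" using False preal by (metis of_real_0)
    ultimately have "0 < Re (M a a)" by simp
    moreover obtain W' where
      "\<forall>s\<in>F. \<forall>t\<in>F. M s t - M s a * M a t / M a a = (\<Sum>k\<in>F. W' s k * cnj (W' t k))"
      using insert.IH cpsd_on_schur_complement[OF psd insert.hyps False] by blast
    ultimately show ?thesis using gram_factor_insert_pivot[OF insert.hyps herm preal] by blast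
  qed
qed


lemma cinner_capply_cquad: "cinner I v (capply I M v) = cquad I M v"
  by (simp add: cinner_capply_expand cquad_def)

lemma cpsd_on_Cauchy_Schwarz:
  assumes psd: "cpsd_on I M" and fin: "finite I"
  shows "(cmod (cinner I u (capply I M w)))\<^sup>2 \<le> Re (cinner I u (capply I M u)) * Re (cinner I w (capply I M w))"
proof -
  obtain W where W: "\<forall>s\<in>I. \<forall>t\<in>I. M s t = (\<Sum>k\<in>I. W s k * cnj (W t k))"
    using cpsd_on_gram_factor[OF fin psd] by blast
  define y where "y u = (\<lambda>k. \<Sum>s\<in>I. cnj (W s k) * u s)" for u :: "_ \<Rightarrow> complex"
  have key: "cinner I u (capply I M w) = cinner I (y u) (y w)" for u w
  proof -
    have "cinner I u (capply I M w) = (\<Sum>s\<in>I. \<Sum>t\<in>I. cnj (u s) * (\<Sum>k\<in>I. W s k * cnj (W t k)) * w t)"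
      unfolding cinner_capply_expand using W by (intro sum.cong refl) auto
    also have "\<dots> = (\<Sum>s\<in>I. \<Sum>t\<in>I. \<Sum>k\<in>I. cnj (u s) * W s k * (cnj (W t k) * w t))"
      by (simp add: sum_distrib_left sum_distrib_right mult.assoc)
    also have "\<dots> = (\<Sum>s\<in>I. \<Sum>k\<in>I. \<Sum>t\<in>I. cnj (u s) * W s k * (cnj (W t k) * w t))"
      by (rule sum.cong[OF refl]) (rule sum.swap)
    also have "\<dots> = (\<Sum>k\<in>I. \<Sum>s\<in>I. \<Sum>t\<in>I. cnj (u s) * W s k * (cnj (W t k) * w t))"
      by (rule sum.swap)
    also have "\<dots> = (\<Sum>k\<in>I. (\<Sum>s\<in>I. cnj (u s) * W s k) * (\<Sum>t\<in>I. cnj (W t k) * w t))"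
      by (simp add: sum_product)
    also have "\<dots> = cinner I (y u) (y w)"
      by (simp add: cinner_def y_def cnj_sum mult.commute)
    finally show ?thesis .
  qed
  show ?thesis unfolding key by (rule cinner_Cauchy_Schwarz)
qed

lemma capply_complement:
  assumes fin: "finite D" and sumI: "\<forall>s\<in>D. \<forall>t\<in>D. M1 s t + M2 s t = (if s = t then 1 else 0)"
    and "j \<in> D"
  shows "capply D M2 v j = v j - capply D M1 v j"
proof -
  have "M2 j t = (if j = t then 1 else 0) - M1 j t" if "t \<in> D" for t
    using sumI \<open>j \<in> D\<close> that by (metis add_diff_cancel_left')
  then have "capply D M2 v j = (\<Sum>t\<in>D. ((if j = t then 1 else 0) - M1 j t) * v t)"
    using \<open>j \<in> D\<close> by (simp add: capply_def)
  also have "\<dots> = (\<Sum>t\<in>D. (if j = t then v t else 0) - M1 j t * v t)"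
    by (intro sum.cong refl) (simp add: left_diff_distrib)
  also have "\<dots> = v j - capply D M1 v j"
    using assms(3) fin by (simp add: capply_def sum_subtractf)
  finally show ?thesis .
qed

text \<open>For \<open>0 \<le> M\<^sub>1 \<le> I\<close> we have \<open>\<parallel>M\<^sub>1 w\<parallel>\<^sup>2 \<le> \<langle>w, M\<^sub>1 w\<rangle>\<close>, by Cauchy--Schwarz for the form of \<open>M\<^sub>1\<close>
  applied to \<open>M\<^sub>1 w\<close> and \<open>w\<close>.\<close>

lemma cpsd_on_norm_le_cquad:
  assumes fin: "finite D" and p1: "cpsd_on D M1" and p2: "cpsd_on D M2"
    and sumI: "\<forall>s\<in>D. \<forall>t\<in>D. M1 s t + M2 s t = (if s = t then 1 else 0)"
  shows "Re (cinner D (capply D M1 w) (capply D M1 w)) \<le> Re (cinner D w (capply D M1 w))"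
proof -
  define m where "m = capply D M1 w"
  define q where "q = Re (cinner D m m)"
  define R where "R = Re (cinner D w m)"
  have q0: "0 \<le> q" by (simp add: q_def Re_cinner_self_nonneg)
  have R0: "0 \<le> R" using p1 unfolding R_def m_def cinner_capply_cquad cpsd_on_cquad by blast
  have mm: "cinner D m m = complex_of_real q" using cinner_self_eq_Re unfolding q_def by blast
  have "cinner D m (capply D M1 m) + cinner D m (capply D M2 m) = cinner D m (\<lambda>j. capply D M1 m j + capply D M2 m j)"
    by (simp add: cinner_add_right)
  also have "\<dots> = cinner D m m" by (rule cinner_cong) (simp_all add: capply_complement[OF fin sumI])
  finally have "Re (cinner D m (capply D M1 m)) + Re (cinner D m (capply D M2 m)) = q"
    unfolding q_def by (metis plus_complex.sel(1))
  moreover have "0 \<le> Re (cinner D m (capply D M2 m))"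
    using p2 unfolding cinner_capply_cquad cpsd_on_cquad by blast
  ultimately have "Re (cinner D m (capply D M1 m)) \<le> q" by linarith
  then have "Re (cinner D m (capply D M1 m)) * Re (cinner D w (capply D M1 w)) \<le> q * R"
    unfolding m_def[symmetric] R_def[symmetric] using R0 by (rule mult_right_mono)
  moreover have "(cmod (cinner D m (capply D M1 w)))\<^sup>2 = q\<^sup>2" unfolding m_def[symmetric] mm by simp
  ultimately have "q * q \<le> q * R"
    using cpsd_on_Cauchy_Schwarz[OF p1 fin, of m w] by (simp add: power2_eq_square)
  then have "q \<le> R" using q0 R0 by (cases "q = 0") simp_all
  then show ?thesis by (simp add: q_def R_def m_def)
qed

text \<open>Hence \<open>\<parallel>(M\<^sub>1 - M\<^sub>2) w\<parallel>\<^sup>2 = \<parallel>(2 M\<^sub>1 - I) w\<parallel>\<^sup>2 = 4 \<parallel>M\<^sub>1 w\<parallel>\<^sup>2 - 4 \<langle>w, M\<^sub>1 w\<rangle> + \<parallel>w\<parallel>\<^sup>2 \<le> \<parallel>w\<parallel>\<^sup>2\<close>.\<close>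

lemma povm_difference_contraction:
  assumes fin: "finite D" and p1: "cpsd_on D M1" and p2: "cpsd_on D M2"
    and sumI: "\<forall>s\<in>D. \<forall>t\<in>D. M1 s t + M2 s t = (if s = t then 1 else 0)"
  shows "Re (cinner D (capply D (\<lambda>s t. M1 s t - M2 s t) w) (capply D (\<lambda>s t. M1 s t - M2 s t) w))
    \<le> Re (cinner D w w)"
proof -
  define m where "m = capply D M1 w"
  have Aw: "capply D (\<lambda>s t. M1 s t - M2 s t) w j = 2 * m j - w j" if "j \<in> D" for j
  proof -
    have "capply D (\<lambda>s t. M1 s t - M2 s t) w j = capply D M1 w j - capply D M2 w j"
      using that by (simp add: capply_def left_diff_distrib sum_subtractf)
    then show ?thesis using capply_complement[OF fin sumI that, of w] by (simp add: m_def)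
  qed
  have "cinner D (capply D (\<lambda>s t. M1 s t - M2 s t) w) (capply D (\<lambda>s t. M1 s t - M2 s t) w)
      = cinner D (\<lambda>j. 2 * m j - w j) (\<lambda>j. 2 * m j - w j)"
    by (rule cinner_cong) (simp_all add: Aw)
  also have "\<dots> = 4 * cinner D m m - 2 * cinner D m w - 2 * cinner D w m + cinner D w w"
    by (simp only: cinner_diff_left cinner_diff_right cinner_scale_left cinner_scale_right) (simp add: algebra_simps)
  finally have e0: "cinner D (capply D (\<lambda>s t. M1 s t - M2 s t) w) (capply D (\<lambda>s t. M1 s t - M2 s t) w)
      = 4 * cinner D m m - 2 * cinner D m w - 2 * cinner D w m + cinner D w w" .
  have "Re (cinner D w m) = Re (cinner D m w)" using cnj_cinner[of D m w] by (metis cnj.sel(1))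
  then show ?thesis
    using e0 cpsd_on_norm_le_cquad[OF fin p1 p2 sumI, of w] by (simp add: m_def)
qed

section \<open>From quantum representations to operator models\<close>

lemma sum_triple_product:
  assumes "finite D" "finite K"
  shows "(\<Sum>p\<in>(D\<times>D)\<times>K. f p) = (\<Sum>i1\<in>D. \<Sum>i2\<in>D. \<Sum>k\<in>K. f ((i1,i2),k))"
  by (simp add: sum.cartesian_product')

text \<open>On indices \<open>((i\<^sub>1, i\<^sub>2), k) \<in> (D \<times> D) \<times> K\<close>, \<open>act_left A\<close> is \<open>A \<otimes> I \<otimes> I\<close> and \<open>act_right B\<close> is
  \<open>I \<otimes> B \<otimes> I\<close>; the factor \<open>K\<close> carries the purification of the state.\<close>

definition act_left :: "(nat \<Rightarrow> nat \<Rightarrow> complex) \<Rightarrow> ((nat\<times>nat)\<times>'k) \<Rightarrow> ((nat\<times>nat)\<times>'k) \<Rightarrow> complex" where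
  "act_left A p q = (if snd (fst p) = snd (fst q) \<and> snd p = snd q then A (fst (fst p)) (fst (fst q)) else 0)"

definition act_right :: "(nat \<Rightarrow> nat \<Rightarrow> complex) \<Rightarrow> ((nat\<times>nat)\<times>'k) \<Rightarrow> ((nat\<times>nat)\<times>'k) \<Rightarrow> complex" where
  "act_right B p q = (if fst (fst p) = fst (fst q) \<and> snd p = snd q then B (snd (fst p)) (snd (fst q)) else 0)"

lemma capply_act_left:
  assumes "finite D" "finite K" "i1 \<in> D" "i2 \<in> D" "k \<in> K"
  shows "capply ((D\<times>D)\<times>K) (act_left A) v ((i1,i2),k) = (\<Sum>j1\<in>D. A i1 j1 * v ((j1,i2),k))"
proof -
  have "capply ((D\<times>D)\<times>K) (act_left A) v ((i1,i2),k) = (\<Sum>j1\<in>D. \<Sum>j2\<in>D. \<Sum>l\<in>K. act_left A ((i1,i2),k)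
      ((j1,j2),l) * v ((j1,j2),l))"
    using assms by (simp add: capply_def sum_triple_product)
  also have "\<dots> = (\<Sum>j1\<in>D. \<Sum>j2\<in>D. if j2 = i2 then (\<Sum>l\<in>K. if l = k then A i1 j1 * v ((j1,j2),l) else 0) else 0)"
  proof (intro sum.cong refl)
    fix j1 j2 show "(\<Sum>l\<in>K. act_left A ((i1,i2),k) ((j1,j2),l) * v ((j1,j2),l)) =
      (if j2 = i2 then (\<Sum>l\<in>K. if l = k then A i1 j1 * v ((j1,j2),l) else 0) else 0)"
      by (cases "j2 = i2") (auto simp: act_left_def intro: sum.cong)
  qed
  also have "\<dots> = (\<Sum>j1\<in>D. A i1 j1 * v ((j1,i2),k))"
    using assms by (simp add: sum.delta')
  finally show ?thesis .
qed

lemma capply_act_right: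
  assumes "finite D" "finite K" "i1 \<in> D" "i2 \<in> D" "k \<in> K"
  shows "capply ((D\<times>D)\<times>K) (act_right B) v ((i1,i2),k) = (\<Sum>j2\<in>D. B i2 j2 * v ((i1,j2),k))"
proof -
  have "capply ((D\<times>D)\<times>K) (act_right B) v ((i1,i2),k) = (\<Sum>j1\<in>D. \<Sum>j2\<in>D. \<Sum>l\<in>K. act_right B ((i1,i2),k)
      ((j1,j2),l) * v ((j1,j2),l))"
    using assms by (simp add: capply_def sum_triple_product)
  also have "\<dots> = (\<Sum>j1\<in>D. if j1 = i1 then (\<Sum>j2\<in>D. (\<Sum>l\<in>K. if l = k then B i2 j2 * v ((j1,j2),l) else 0)) else 0)"
  proof (intro sum.cong refl)
    fix j1 show "(\<Sum>j2\<in>D. \<Sum>l\<in>K. act_right B ((i1,i2),k) ((j1,j2),l) * v ((j1,j2),l)) =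
      (if j1 = i1 then (\<Sum>j2\<in>D. (\<Sum>l\<in>K. if l = k then B i2 j2 * v ((j1,j2),l) else 0)) else 0)"
      by (cases "j1 = i1") (auto simp: act_right_def intro!: sum.cong)
  qed
  also have "\<dots> = (\<Sum>j2\<in>D. B i2 j2 * v ((i1,j2),k))"
    using assms by (simp add: sum.delta')
  finally show ?thesis .
qed

lemma act_left_act_right_commute:
  assumes "finite D" "finite K"
  shows "capply ((D\<times>D)\<times>K) (act_left A) (capply ((D\<times>D)\<times>K) (act_right B) v)
      = capply ((D\<times>D)\<times>K) (act_right B) (capply ((D\<times>D)\<times>K) (act_left A) v)"
proof
  fix p
  show "capply ((D\<times>D)\<times>K) (act_left A) (capply ((D\<times>D)\<times>K) (act_right B) v) p
      = capply ((D\<times>D)\<times>K) (act_right B) (capply ((D\<times>D)\<times>K) (act_left A) v) p"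
  proof (cases "p \<in> (D\<times>D)\<times>K")
    case False then show ?thesis by (simp add: capply_outside)
  next
    case True
    then obtain i1 i2 k where p: "p = ((i1,i2),k)" "i1 \<in> D" "i2 \<in> D" "k \<in> K" by auto
    have "capply ((D\<times>D)\<times>K) (act_left A) (capply ((D\<times>D)\<times>K) (act_right B) v) p = (\<Sum>j1\<in>D. A i1 j1
        * (\<Sum>j2\<in>D. B i2 j2 * v ((j1,j2),k)))"
      using p assms by (simp add: capply_act_left capply_act_right)
    also have "\<dots> = (\<Sum>j2\<in>D. B i2 j2 * (\<Sum>j1\<in>D. A i1 j1 * v ((j1,j2),k)))"
      by (simp add: sum_distrib_left mult.left_commute) (rule sum.swap)
    also have "\<dots> = capply ((D\<times>D)\<times>K) (act_right B) (capply ((D\<times>D)\<times>K) (act_left A) v) p"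
      using p assms by (simp add: capply_act_left capply_act_right)
    finally show ?thesis .
  qed
qed

lemma hermitian_act_left:
  assumes "hermitian_on D A"
  shows "hermitian_on ((D\<times>D)\<times>K) (act_left A)"
  unfolding hermitian_on_def
proof (intro ballI)
  fix p q assume p: "p \<in> (D\<times>D)\<times>K" and q: "q \<in> (D\<times>D)\<times>K"
  have "A (fst (fst q)) (fst (fst p)) = cnj (A (fst (fst p)) (fst (fst q)))"
    using assms p q unfolding hermitian_on_def by auto
  then show "act_left A q p = cnj (act_left A p q)" by (auto simp: act_left_def)
qed

lemma hermitian_act_right:
  assumes "hermitian_on D B"
  shows "hermitian_on ((D\<times>D)\<times>K) (act_right B)"
  unfolding hermitian_on_def
proof (intro ballI)
  fix p q assume p: "p \<in> (D\<times>D)\<times>K" and q: "q \<in> (D\<times>D)\<times>K"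
  have "B (snd (fst q)) (snd (fst p)) = cnj (B (snd (fst p)) (snd (fst q)))"
    using assms p q unfolding hermitian_on_def by auto
  then show "act_right B q p = cnj (act_right B p q)" by (auto simp: act_right_def)
qed

lemma cinner_triple_product: "finite D \<Longrightarrow> finite K \<Longrightarrow>
  cinner ((D\<times>D)\<times>K) u w = (\<Sum>i1\<in>D. \<Sum>i2\<in>D. \<Sum>k\<in>K. cnj (u ((i1,i2),k)) * w ((i1,i2),k))"
  by (simp add: cinner_def sum_triple_product)

lemma act_left_contraction:
  assumes fD: "finite D" and fK: "finite K"
    and contr: "\<And>w. Re (cinner D (capply D A w) (capply D A w)) \<le> Re (cinner D w w)"
  shows "Re (cinner ((D\<times>D)\<times>K) (capply ((D\<times>D)\<times>K) (act_left A) v) (capply ((D\<times>D)\<times>K) (act_left A) v))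
      \<le> Re (cinner ((D\<times>D)\<times>K) v v)"
proof -
  let ?J = "(D\<times>D)\<times>K"
  let ?u = "capply ?J (act_left A) v"
  define w where "w i2 k = (\<lambda>j1. v ((j1,i2),k))" for i2 k
  have uw: "?u ((i1,i2),k) = capply D A (w i2 k) i1" if "i1 \<in> D" "i2 \<in> D" "k \<in> K" for i1 i2 k
    using capply_act_left[OF fD fK that, of A v] that by (simp add: capply_def w_def)
  have "cinner ?J ?u ?u = (\<Sum>i1\<in>D. \<Sum>i2\<in>D. \<Sum>k\<in>K. cnj (?u ((i1,i2),k)) * ?u ((i1,i2),k))"
    by (rule cinner_triple_product[OF fD fK])
  also have "\<dots> = (\<Sum>i2\<in>D. \<Sum>k\<in>K. \<Sum>i1\<in>D. cnj (?u ((i1,i2),k)) * ?u ((i1,i2),k))"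
    by (subst sum.swap) (intro sum.cong refl, rule sum.swap)
  also have "\<dots> = (\<Sum>i2\<in>D. \<Sum>k\<in>K. cinner D (capply D A (w i2 k)) (capply D A (w i2 k)))"
    unfolding cinner_def by (intro sum.cong refl) (simp add: uw)
  finally have e1: "cinner ?J ?u ?u = (\<Sum>i2\<in>D. \<Sum>k\<in>K. cinner D (capply D A (w i2 k)) (capply D A (w i2 k)))" .
  have "cinner ?J v v = (\<Sum>i1\<in>D. \<Sum>i2\<in>D. \<Sum>k\<in>K. cnj (v ((i1,i2),k)) * v ((i1,i2),k))"
    by (rule cinner_triple_product[OF fD fK])
  also have "\<dots> = (\<Sum>i2\<in>D. \<Sum>k\<in>K. \<Sum>i1\<in>D. cnj (v ((i1,i2),k)) * v ((i1,i2),k))"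
    by (subst sum.swap) (intro sum.cong refl, rule sum.swap)
  also have "\<dots> = (\<Sum>i2\<in>D. \<Sum>k\<in>K. cinner D (w i2 k) (w i2 k))"
    unfolding cinner_def w_def by simp
  finally have e2: "cinner ?J v v = (\<Sum>i2\<in>D. \<Sum>k\<in>K. cinner D (w i2 k) (w i2 k))" .
  show ?thesis unfolding e1 e2 Re_sum by (intro sum_mono contr)
qed

lemma act_right_contraction:
  assumes fD: "finite D" and fK: "finite K"
    and contr: "\<And>w. Re (cinner D (capply D B w) (capply D B w)) \<le> Re (cinner D w w)"
  shows "Re (cinner ((D\<times>D)\<times>K) (capply ((D\<times>D)\<times>K) (act_right B) v) (capply ((D\<times>D)\<times>K) (act_right B) v))
      \<le> Re (cinner ((D\<times>D)\<times>K) v v)"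
proof -
  let ?J = "(D\<times>D)\<times>K"
  let ?u = "capply ?J (act_right B) v"
  define w where "w i1 k = (\<lambda>j2. v ((i1,j2),k))" for i1 k
  have uw: "?u ((i1,i2),k) = capply D B (w i1 k) i2" if "i1 \<in> D" "i2 \<in> D" "k \<in> K" for i1 i2 k
    using capply_act_right[OF fD fK that, of B v] that by (simp add: capply_def w_def)
  have "cinner ?J ?u ?u = (\<Sum>i1\<in>D. \<Sum>i2\<in>D. \<Sum>k\<in>K. cnj (?u ((i1,i2),k)) * ?u ((i1,i2),k))"
    by (rule cinner_triple_product[OF fD fK])
  also have "\<dots> = (\<Sum>i1\<in>D. \<Sum>k\<in>K. \<Sum>i2\<in>D. cnj (?u ((i1,i2),k)) * ?u ((i1,i2),k))"
    by (intro sum.cong refl, rule sum.swap)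
  also have "\<dots> = (\<Sum>i1\<in>D. \<Sum>k\<in>K. cinner D (capply D B (w i1 k)) (capply D B (w i1 k)))"
    unfolding cinner_def by (intro sum.cong refl) (simp add: uw)
  finally have e1: "cinner ?J ?u ?u = (\<Sum>i1\<in>D. \<Sum>k\<in>K. cinner D (capply D B (w i1 k)) (capply D B (w i1 k)))" .
  have "cinner ?J v v = (\<Sum>i1\<in>D. \<Sum>i2\<in>D. \<Sum>k\<in>K. cnj (v ((i1,i2),k)) * v ((i1,i2),k))"
    by (rule cinner_triple_product[OF fD fK])
  also have "\<dots> = (\<Sum>i1\<in>D. \<Sum>k\<in>K. \<Sum>i2\<in>D. cnj (v ((i1,i2),k)) * v ((i1,i2),k))"
    by (intro sum.cong refl, rule sum.swap)
  also have "\<dots> = (\<Sum>i1\<in>D. \<Sum>k\<in>K. cinner D (w i1 k) (w i1 k))"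
    unfolding cinner_def w_def by simp
  finally have e2: "cinner ?J v v = (\<Sum>i1\<in>D. \<Sum>k\<in>K. cinner D (w i1 k) (w i1 k))" .
  show ?thesis unfolding e1 e2 Re_sum by (intro sum_mono contr)
qed

lemma cinner_purification_act:
  assumes fD: "finite D"
    and W: "\<forall>s\<in>D\<times>D. \<forall>t\<in>D\<times>D. rho s t = (\<Sum>k\<in>D\<times>D. W s k * cnj (W t k))"
  shows "cinner ((D\<times>D)\<times>(D\<times>D)) (\<lambda>p. if p \<in> (D\<times>D)\<times>(D\<times>D) then W (fst p) (snd p) else 0)
      (capply ((D\<times>D)\<times>(D\<times>D)) (act_left A) (capply ((D\<times>D)\<times>(D\<times>D)) (act_right B) (\<lambda>p. if p \<in> (D\<times>D)\<times>(D\<times>D)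
          then W (fst p) (snd p) else 0)))
    = (\<Sum>s\<in>D\<times>D. \<Sum>t\<in>D\<times>D. A (fst s) (fst t) * B (snd s) (snd t) * rho t s)"
proof -
  let ?I = "D\<times>D"
  let ?J = "?I \<times> ?I"
  let ?psi = "\<lambda>p. if p \<in> ?J then W (fst p) (snd p) else 0"
  have fI: "finite ?I" using fD by simp
  have X: "capply ?J (act_left A) (capply ?J (act_right B) ?psi) (s,k) = (\<Sum>t\<in>?I. A (fst s) (fst t)
      * B (snd s) (snd t) * W t k)"
    if sk: "s \<in> ?I" "k \<in> ?I" for s k
  proof -
    obtain i1 i2 where s: "s = (i1,i2)" "i1 \<in> D" "i2 \<in> D" using sk by (cases s) auto
    have "capply ?J (act_left A) (capply ?J (act_right B) ?psi) ((i1,i2),k) = (\<Sum>j1\<in>D. A i1 j1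
        * (\<Sum>j2\<in>D. B i2 j2 * W (j1,j2) k))"
      using s sk fD fI by (simp add: capply_act_left capply_act_right)
    also have "\<dots> = (\<Sum>j1\<in>D. \<Sum>j2\<in>D. A i1 j1 * B i2 j2 * W (j1,j2) k)"
      by (simp add: sum_distrib_left mult.assoc)
    also have "\<dots> = (\<Sum>t\<in>?I. A i1 (fst t) * B i2 (snd t) * W t k)"
      by (simp add: sum.cartesian_product')
    finally show ?thesis using s by simp
  qed
  have "cinner ?J ?psi (capply ?J (act_left A) (capply ?J (act_right B) ?psi))
      = (\<Sum>s\<in>?I. \<Sum>k\<in>?I. cnj (W s k) * capply ?J (act_left A) (capply ?J (act_right B) ?psi) (s,k))"
    by (simp add: cinner_def sum.cartesian_product')
  also have "\<dots> = (\<Sum>s\<in>?I. \<Sum>k\<in>?I. \<Sum>t\<in>?I. cnj (W s k) * (A (fst s) (fst t) * B (snd s) (snd t) * W t k))"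
    by (intro sum.cong refl) (simp add: X sum_distrib_left)
  also have "\<dots> = (\<Sum>s\<in>?I. \<Sum>t\<in>?I. \<Sum>k\<in>?I. A (fst s) (fst t) * B (snd s) (snd t) * (W t k * cnj (W s k)))"
  proof (rule sum.cong[OF refl])
    fix s
    have "(\<Sum>k\<in>?I. \<Sum>t\<in>?I. cnj (W s k) * (A (fst s) (fst t) * B (snd s) (snd t) * W t k))
        = (\<Sum>t\<in>?I. \<Sum>k\<in>?I. cnj (W s k) * (A (fst s) (fst t) * B (snd s) (snd t) * W t k))"
      by (rule sum.swap)
    then show "(\<Sum>k\<in>?I. \<Sum>t\<in>?I. cnj (W s k) * (A (fst s) (fst t) * B (snd s) (snd t) * W t k))
        = (\<Sum>t\<in>?I. \<Sum>k\<in>?I. A (fst s) (fst t) * B (snd s) (snd t) * (W t k * cnj (W s k)))"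
      by (simp add: mult.commute mult.left_commute)
  qed
  also have "\<dots> = (\<Sum>s\<in>?I. \<Sum>t\<in>?I. A (fst s) (fst t) * B (snd s) (snd t) * rho t s)"
  proof (intro sum.cong refl)
    fix s t assume "s \<in> ?I" "t \<in> ?I"
    then have "rho t s = (\<Sum>k\<in>?I. W t k * cnj (W s k))" using W by blast
    then show "(\<Sum>k\<in>?I. A (fst s) (fst t) * B (snd s) (snd t) * (W t k * cnj (W s k))) =
        A (fst s) (fst t) * B (snd s) (snd t) * rho t s" by (simp add: sum_distrib_left)
  qed
  finally show ?thesis .
qed

lemma tensor_apply: "tensor P Q s t = P (fst s) (fst t) * Q (snd s) (snd t)"
  by (cases s, cases t) (simp add: tensor_def)

lemma ctrace_tensor_mult: "ctrace_on I (cmult_on I (tensor P Q) rho)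
    = (\<Sum>s\<in>I. \<Sum>t\<in>I. P (fst s) (fst t) * Q (snd s) (snd t) * rho t s)"
  by (simp add: ctrace_on_def cmult_on_def tensor_apply)

lemma sum_outcomes: "(\<Sum>a\<in>outcomes. f a) = f (-1) + f 1"
  by (simp add: outcomes_def)

definition povm_observable :: "(int \<Rightarrow> nat cmat) \<Rightarrow> nat cmat" where
  "povm_observable M = (\<lambda>s t. M 1 s t - M (-1) s t)"

lemma povm_observable_hermitian:
  assumes "is_povm d M" shows "hermitian_on {..<d} (povm_observable M)"
  unfolding hermitian_on_def
proof (intro ballI)
  fix i j assume "i \<in> {..<d}" "j \<in> {..<d}"
  moreover have "hermitian_on {..<d} (M a)" if "a \<in> outcomes" for a
    using assms that by (simp add: is_povm_def cpsd_on_def)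
  ultimately have "M a j i = cnj (M a i j)" if "a \<in> outcomes" for a
    using that unfolding hermitian_on_def by blast
  then show "povm_observable M j i = cnj (povm_observable M i j)"
    by (simp add: povm_observable_def outcomes_def)
qed

lemma povm_observable_contraction:
  assumes "is_povm d M"
  shows "Re (cinner {..<d} (capply {..<d} (povm_observable M) w) (capply {..<d} (povm_observable M) w))
    \<le> Re (cinner {..<d} w w)"
  unfolding povm_observable_def
proof (rule povm_difference_contraction)
  show "cpsd_on {..<d} (M 1)" "cpsd_on {..<d} (M (-1))"
    using assms by (simp_all add: is_povm_def outcomes_def)
  show "\<forall>s\<in>{..<d}. \<forall>t\<in>{..<d}. M 1 s t + M (-1) s t = (if s = t then 1 else 0)"
    using assms by (auto simp: is_povm_def sum_outcomes cident_def add.commute)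
qed simp

lemma p_C_correlation:
  assumes "\<And>a b. a \<in> outcomes \<Longrightarrow> b \<in> outcomes \<Longrightarrow>
    complex_of_real (p_C C a b x y) = ctrace_on I (cmult_on I (tensor (M a) (N b)) rho)"
  shows "complex_of_real (C$x$y) = ctrace_on I (cmult_on I (tensor (povm_observable M) (povm_observable N)) rho)"
proof -
  have "C$x$y = p_C C 1 1 x y - p_C C 1 (-1) x y - p_C C (-1) 1 x y + p_C C (-1) (-1) x y"
    by (simp add: p_C_def field_simps)
  then have "complex_of_real (C$x$y)
      = ctrace_on I (cmult_on I (tensor (M 1) (N 1)) rho) - ctrace_on I (cmult_on I (tensor (M 1) (N (-1))) rho)
      - ctrace_on I (cmult_on I (tensor (M (-1)) (N 1)) rho) + ctrace_on I (cmult_on I (tensor (M (-1)) (N (-1))) rho)"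
    by (simp add: assms outcomes_def)
  then show ?thesis
    by (simp add: ctrace_tensor_mult povm_observable_def algebra_simps sum_subtractf sum.distrib)
qed

text \<open>A quantum representation of \<open>p\<^sub>C\<close> in dimension \<open>d\<close> yields an operator model of \<open>C\<close> on
  \<open>(\<complex>\<^sup>d \<otimes> \<complex>\<^sup>d) \<otimes> (\<complex>\<^sup>d \<otimes> \<complex>\<^sup>d)\<close>: purify the state through a Gram factor \<open>\<rho> = W W\<^sup>*\<close> and
  let the \<open>\<pm>1\<close>-observables act on the first and second tensor factor.\<close>

lemma has_qrep_operator_model:
  fixes C :: "real^'n^'n"
  assumes q: "has_qrep d (p_C C)" and e: "C extreme_point_of elliptope"
  shows "\<exists>psi a b. operator_model (({..<d} \<times> {..<d}) \<times> ({..<d} \<times> {..<d})) psi a b C"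
proof -
  let ?D = "{..<d}"
  let ?I = "?D \<times> ?D"
  let ?J = "?I \<times> ?I"
  from q obtain rho :: "(nat \<times> nat) cmat" and M N :: "'n \<Rightarrow> int \<Rightarrow> nat cmat"
    where rpsd: "cpsd_on ?I rho" and rtr: "ctrace_on ?I rho = 1"
      and pM: "\<And>x. is_povm d (M x)" and pN: "\<And>y. is_povm d (N y)"
      and pr: "\<And>x y a b. a \<in> outcomes \<Longrightarrow> b \<in> outcomes \<Longrightarrow>
        complex_of_real (p_C C a b x y) = ctrace_on ?I (cmult_on ?I (tensor (M x a) (N y b)) rho)"
    unfolding has_qrep_def by blast
  obtain W where W: "\<forall>s\<in>?I. \<forall>t\<in>?I. rho s t = (\<Sum>k\<in>?I. W s k * cnj (W t k))"
    using cpsd_on_gram_factor[OF _ rpsd] by blast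
  define psi where "psi = (\<lambda>p. if p \<in> ?J then W (fst p) (snd p) else 0)"
  define A where "A x = povm_observable (M x)" for x
  define B where "B y = povm_observable (N y)" for y
  have "operator_model ?J psi (\<lambda>x. act_left (A x)) (\<lambda>y. act_right (B y)) C"
  proof
    show "finite ?J" by simp
    show "psi \<in> vectors_on ?J" by (simp add: vectors_on_def psi_def)
    have "cinner ?J psi psi = (\<Sum>s\<in>?I. \<Sum>k\<in>?I. W s k * cnj (W s k))"
      by (simp add: cinner_def psi_def sum.cartesian_product' mult.commute)
    also have "\<dots> = ctrace_on ?I rho"
      unfolding ctrace_on_def using W by (intro sum.cong) auto
    finally show "cinner ?J psi psi = 1" using rtr by simp
    show "hermitian_on ?J (act_left (A x))" for x
      by (rule hermitian_act_left) (simp add: A_def povm_observable_hermitian pM)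
    show "hermitian_on ?J (act_right (B x))" for x
      by (rule hermitian_act_right) (simp add: B_def povm_observable_hermitian pN)
    show "Re (cinner ?J (capply ?J (act_left (A x)) v) (capply ?J (act_left (A x)) v)) \<le> Re (cinner ?J v v)" for x v
      by (rule act_left_contraction) (simp_all add: A_def povm_observable_contraction pM)
    show "Re (cinner ?J (capply ?J (act_right (B x)) v) (capply ?J (act_right (B x)) v)) \<le> Re (cinner ?J v v)" for x v
      by (rule act_right_contraction) (simp_all add: B_def povm_observable_contraction pN)
    show "capply ?J (act_left (A x)) (capply ?J (act_right (B y)) v)
        = capply ?J (act_right (B y)) (capply ?J (act_left (A x)) v)" for x y v
      by (rule act_left_act_right_commute) simp_all
    show "complex_of_real (C$x$y) = cinner ?J psi (capply ?J (act_left (A x)) (capply ?J (act_right (B y)) psi))" for x y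
    proof -
      have "complex_of_real (C$x$y) = ctrace_on ?I (cmult_on ?I (tensor (A x) (B y)) rho)"
        unfolding A_def B_def by (rule p_C_correlation) (simp add: pr)
      also have "\<dots> = cinner ?J psi (capply ?J (act_left (A x)) (capply ?J (act_right (B y)) psi))"
        unfolding ctrace_tensor_mult psi_def by (rule cinner_purification_act[OF _ W, symmetric]) simp
      finally show ?thesis .
    qed
    show "C extreme_point_of elliptope" by (rule e)
  qed
  then show ?thesis by blast
qed

lemma has_qrep_four_pow_rank_le:
  fixes C :: "real^'n^'n"
  assumes "has_qrep d (p_C C)" and "C extreme_point_of elliptope"
  shows "4 ^ (rank C div 2) \<le> d ^ 4"
proof -
  obtain psi a b where "operator_model (({..<d} \<times> {..<d}) \<times> ({..<d} \<times> {..<d})) psi a b C"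
    using has_qrep_operator_model[OF assms] by blast
  then have "4 ^ (rank C div 2) \<le> card (({..<d} \<times> {..<d}) \<times> ({..<d} \<times> {..<d}))"
    by (rule operator_model.four_pow_rank_le_card)
  then show ?thesis by (simp add: card_cartesian_product power4_eq_xxxx)
qed

section \<open>Existence of a quantum representation\<close>

lemma sum_lessThan_double: "(\<Sum>j<2*h. f j) = (\<Sum>j<h. f j) + (\<Sum>j<h. f (j + h)) " for f :: "nat \<Rightarrow> 'a::comm_monoid_add"
proof -
  have "(\<Sum>j<2*h. f j) = sum f {0..<h} + sum f {h..<2*h}"
    using sum.atLeastLessThan_concat[of 0 h "2*h" f] by (simp add: atLeast0LessThan)
  also have "sum f {h..<2*h} = sum f {0+h..<h+h}" by (simp add: mult_2)
  also have "\<dots> = (\<Sum>j<h. f (j + h))" using sum.shift_bounds_nat_ivl[of f 0 h h] by (simp only: atLeast0LessThan)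
  finally show ?thesis by (simp add: atLeast0LessThan)
qed

definition rmat_mult :: "nat \<Rightarrow> (nat \<Rightarrow> nat \<Rightarrow> real) \<Rightarrow> (nat \<Rightarrow> nat \<Rightarrow> real) \<Rightarrow> nat \<Rightarrow> nat \<Rightarrow> real" where
  "rmat_mult n X Y = (\<lambda>a b. \<Sum>j<n. X a j * Y j b)"

definition rmat_block :: "nat \<Rightarrow> (nat \<Rightarrow> nat \<Rightarrow> real) \<Rightarrow> (nat \<Rightarrow> nat \<Rightarrow> real) \<Rightarrow> (nat \<Rightarrow> nat \<Rightarrow> real) \<Rightarrow> (nat
    \<Rightarrow> nat \<Rightarrow> real) \<Rightarrow> nat \<Rightarrow> nat \<Rightarrow> real" where
  "rmat_block h P Q R S = (\<lambda>a b. if a < h then (if b < h then P a b else Q a (b - h)) else (if b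
      < h then R (a - h) b else S (a - h) (b - h)))"

definition rmat_id :: "nat \<Rightarrow> nat \<Rightarrow> real" where "rmat_id a b = (if a = b then 1 else 0)"

lemma rmat_mult_block:
  assumes "a < 2*h" "b < 2*h"
  shows "rmat_mult (2*h) (rmat_block h P Q R S) (rmat_block h P' Q' R' S') a b =
    rmat_block h (\<lambda>a b. rmat_mult h P P' a b + rmat_mult h Q R' a b) (\<lambda>a b. rmat_mult h P Q' a b + rmat_mult h Q S' a b)
          (\<lambda>a b. rmat_mult h R P' a b + rmat_mult h S R' a b) (\<lambda>a b. rmat_mult h R Q' a b + rmat_mult h S S' a b) a b"
  using assms by (simp add: rmat_mult_def sum_lessThan_double rmat_block_def)

lemma rmat_block_eqI:
  assumes "\<And>a b. a < h \<Longrightarrow> b < h \<Longrightarrow> P a b = P' a b" "\<And>a b. a < h \<Longrightarrow> b < h \<Longrightarrow> Q a b = Q' a b"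
    "\<And>a b. a < h \<Longrightarrow> b < h \<Longrightarrow> R a b = R' a b" "\<And>a b. a < h \<Longrightarrow> b < h \<Longrightarrow> S a b = S' a b"
    "a < 2*h" "b < 2*h"
  shows "rmat_block h P Q R S a b = rmat_block h P' Q' R' S' a b"
  using assms by (auto simp: rmat_block_def)

lemma rmat_mult_zero_left[simp]: "rmat_mult h (\<lambda>a b. 0) X a b = 0" by (simp add: rmat_mult_def)
lemma rmat_mult_zero_right[simp]: "rmat_mult h X (\<lambda>a b. 0) a b = 0" by (simp add: rmat_mult_def)
lemma rmat_mult_id_left: "a < h \<Longrightarrow> rmat_mult h rmat_id X a b = X a b"
proof -
  assume "a < h"
  have eq: "(\<lambda>j. rmat_id a j * X j b) = (\<lambda>j. if j = a then X a b else 0)" by (auto simp: rmat_id_def fun_eq_iff)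
  show ?thesis unfolding rmat_mult_def eq using \<open>a < h\<close> by simp
qed
lemma rmat_mult_id_right: "b < h \<Longrightarrow> rmat_mult h X rmat_id a b = X a b"
proof -
  assume "b < h"
  have eq: "(\<lambda>j. X a j * rmat_id j b) = (\<lambda>j. if j = b then X a b else 0)" by (auto simp: rmat_id_def fun_eq_iff)
  show ?thesis unfolding rmat_mult_def eq using \<open>b < h\<close> by simp
qed
lemma rmat_block_add: "rmat_block h P Q R S a b + rmat_block h P' Q' R' S' a b
    = rmat_block h (\<lambda>a b. P a b + P' a b) (\<lambda>a b. Q a b + Q' a b) (\<lambda>a b. R a b + R' a b) (\<lambda>a b. S a b
    + S' a b) a b"
  by (simp add: rmat_block_def)
lemma rmat_mult_neg_left: "rmat_mult h (\<lambda>a b. - X a b) Y a b = - rmat_mult h X Y a b" by (simp add: rmat_mult_def sum_negf)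
lemma rmat_mult_neg_right: "rmat_mult h X (\<lambda>a b. - Y a b) a b = - rmat_mult h X Y a b" by (simp add: rmat_mult_def sum_negf)

fun clifford_gen :: "nat \<Rightarrow> nat \<Rightarrow> nat \<Rightarrow> nat \<Rightarrow> real" where
  "clifford_gen 0 i = (\<lambda>a b. 0)"
| "clifford_gen (Suc m) i = (if i < m then rmat_block (2^m) (clifford_gen m i) (\<lambda>a b. 0) (\<lambda>a b. 0)
    (\<lambda>a b. - clifford_gen m i a b)
     else if i = m then rmat_block (2^m) (\<lambda>a b. 0) rmat_id rmat_id (\<lambda>a b. 0) else (\<lambda>a b. 0))"

lemma clifford_gen_sym: "clifford_gen m i a b = clifford_gen m i b a"
proof (induction m arbitrary: i a b)
  case 0 then show ?case by simp
next
  case (Suc m) then show ?case by (auto simp: rmat_block_def rmat_id_def)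
qed

lemma clifford_gen_trace: "i < m \<Longrightarrow> sum (\<lambda>a. clifford_gen m i a a) {..<2^m} = 0"
proof (induction m arbitrary: i)
  case 0 then show ?case by simp
next
  case (Suc m)
  have s: "sum f {..<2^Suc m} = sum f {..<2^m} + sum (\<lambda>a. f (a + 2^m)) {..<2^m}" for f :: "nat \<Rightarrow> real"
    using sum_lessThan_double[where h = "2^m" and f = f] by simp
  show ?case
  proof (cases "i < m")
    case True then show ?thesis using Suc.IH[OF True] by (simp add: sum_lessThan_double rmat_block_def sum_negf)
  next
    case False then have "i = m" using Suc.prems by simp
    then show ?thesis by (simp add: sum_lessThan_double rmat_block_def)
  qed
qed

definition ranticomm :: "nat \<Rightarrow> (nat \<Rightarrow> nat \<Rightarrow> real) \<Rightarrow> (nat \<Rightarrow> nat \<Rightarrow> real) \<Rightarrow> nat \<Rightarrow> nat \<Rightarrow> real" where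
  "ranticomm n X Y a b = rmat_mult n X Y a b + rmat_mult n Y X a b"

lemma ranticomm_commute: "ranticomm n X Y a b = ranticomm n Y X a b"
  by (simp add: ranticomm_def add.commute)

lemma ranticomm_block_diag:
  assumes "a < 2*h" "b < 2*h"
  shows "ranticomm (2*h) (rmat_block h X (\<lambda>a b. 0) (\<lambda>a b. 0) (\<lambda>a b. - X a b))
      (rmat_block h Y (\<lambda>a b. 0) (\<lambda>a b. 0) (\<lambda>a b. - Y a b)) a b
    = rmat_block h (ranticomm h X Y) (\<lambda>a b. 0) (\<lambda>a b. 0) (ranticomm h X Y) a b"
  unfolding ranticomm_def rmat_mult_block[OF assms] rmat_block_add
  by (rule rmat_block_eqI) (use assms in \<open>auto simp: rmat_mult_neg_left rmat_mult_neg_right\<close>)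

lemma ranticomm_block_diag_swap:
  assumes "a < 2*h" "b < 2*h"
  shows "ranticomm (2*h) (rmat_block h X (\<lambda>a b. 0) (\<lambda>a b. 0) (\<lambda>a b. - X a b))
      (rmat_block h (\<lambda>a b. 0) rmat_id rmat_id (\<lambda>a b. 0)) a b = 0"
proof -
  have "ranticomm (2*h) (rmat_block h X (\<lambda>a b. 0) (\<lambda>a b. 0) (\<lambda>a b. - X a b))
      (rmat_block h (\<lambda>a b. 0) rmat_id rmat_id (\<lambda>a b. 0)) a b
    = rmat_block h (\<lambda>a b. 0) (\<lambda>a b. 0) (\<lambda>a b. 0) (\<lambda>a b. 0) a b"
    unfolding ranticomm_def rmat_mult_block[OF assms] rmat_block_add
    by (rule rmat_block_eqI)
      (use assms in \<open>auto simp: rmat_mult_neg_left rmat_mult_neg_right rmat_mult_id_left rmat_mult_id_right\<close>)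
  then show ?thesis by (simp add: rmat_block_def)
qed

lemma ranticomm_block_swap_self:
  assumes "a < 2*h" "b < 2*h"
  shows "ranticomm (2*h) (rmat_block h (\<lambda>a b. 0) rmat_id rmat_id (\<lambda>a b. 0))
      (rmat_block h (\<lambda>a b. 0) rmat_id rmat_id (\<lambda>a b. 0)) a b = 2 * rmat_id a b"
proof -
  have "ranticomm (2*h) (rmat_block h (\<lambda>a b. 0) rmat_id rmat_id (\<lambda>a b. 0))
      (rmat_block h (\<lambda>a b. 0) rmat_id rmat_id (\<lambda>a b. 0)) a b
    = rmat_block h (\<lambda>a b. 2 * rmat_id a b) (\<lambda>a b. 0) (\<lambda>a b. 0) (\<lambda>a b. 2 * rmat_id a b) a b"
    unfolding ranticomm_def rmat_mult_block[OF assms] rmat_block_add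
    by (rule rmat_block_eqI) (use assms in \<open>auto simp: rmat_mult_id_left\<close>)
  then show ?thesis using assms by (auto simp: rmat_block_def rmat_id_def)
qed

lemma clifford_gen_anticommute:
  "i < m \<Longrightarrow> k < m \<Longrightarrow> a < 2^m \<Longrightarrow> b < 2^m \<Longrightarrow>
   ranticomm (2^m) (clifford_gen m i) (clifford_gen m k) a b = (if i = k then 2 * rmat_id a b else 0)"
proof (induction m arbitrary: i k a b)
  case 0 then show ?case by simp
next
  case (Suc m)
  have ab: "a < 2 * 2^m" "b < 2 * 2^m" using Suc.prems by auto
  consider "i < m" "k < m" | "i < m" "k = m" | "i = m" "k < m" | "i = m" "k = m"
    using Suc.prems by linarith
  then show ?case
  proof cases
    case 1
    then have "ranticomm (2^Suc m) (clifford_gen (Suc m) i) (clifford_gen (Suc m) k) a b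
        = rmat_block (2^m) (ranticomm (2^m) (clifford_gen m i) (clifford_gen m k)) (\<lambda>a b. 0) (\<lambda>a b. 0)
            (ranticomm (2^m) (clifford_gen m i) (clifford_gen m k)) a b"
      using ranticomm_block_diag[OF ab] by simp
    also have "\<dots> = (if i = k then 2 * rmat_id a b else 0)"
      using Suc.IH[OF 1] ab by (auto simp: rmat_block_def rmat_id_def)
    finally show ?thesis .
  next
    case 2
    then show ?thesis using ranticomm_block_diag_swap[OF ab] by simp
  next
    case 3
    then show ?thesis using ranticomm_block_diag_swap[OF ab] by (simp add: ranticomm_commute)
  next
    case 4
    then show ?thesis using ranticomm_block_swap_self[OF ab] by simp
  qed
qed

lemma rmat_mult_lincomb:
  "rmat_mult n (\<lambda>a b. \<Sum>i<r. f i * G i a b) (\<lambda>a b. \<Sum>k<r. g k * H k a b) a b = (\<Sum>i<r. \<Sum>k<r. f i * g k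
      * rmat_mult n (G i) (H k) a b)"
proof -
  have "rmat_mult n (\<lambda>a b. \<Sum>i<r. f i * G i a b) (\<lambda>a b. \<Sum>k<r. g k * H k a b) a b
     = (\<Sum>j<n. (\<Sum>i<r. f i * G i a j) * (\<Sum>k<r. g k * H k j b))"
    by (simp add: rmat_mult_def)
  also have "\<dots> = (\<Sum>j<n. \<Sum>i<r. \<Sum>k<r. f i * g k * (G i a j * H k j b))"
    by (simp add: sum_product ac_simps)
  also have "\<dots> = (\<Sum>i<r. \<Sum>j<n. \<Sum>k<r. f i * g k * (G i a j * H k j b))" by (rule sum.swap)
  also have "\<dots> = (\<Sum>i<r. \<Sum>k<r. \<Sum>j<n. f i * g k * (G i a j * H k j b))"
    by (rule sum.cong[OF refl]) (rule sum.swap)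
  also have "\<dots> = (\<Sum>i<r. \<Sum>k<r. f i * g k * rmat_mult n (G i) (H k) a b)"
    by (simp add: rmat_mult_def sum_distrib_left)
  finally show ?thesis .
qed

definition clifford_comb :: "nat \<Rightarrow> (nat \<Rightarrow> real) \<Rightarrow> nat \<Rightarrow> nat \<Rightarrow> real" where
  "clifford_comb r w = (\<lambda>a b. \<Sum>i<r. w i * clifford_gen r i a b)"

lemma clifford_comb_sym: "clifford_comb r w a b = clifford_comb r w b a"
  by (simp add: clifford_comb_def clifford_gen_sym)

lemma clifford_comb_trace: "(\<Sum>a<2^r. clifford_comb r w a a) = 0"
proof -
  have "(\<Sum>a<2^r. clifford_comb r w a a) = (\<Sum>i<r. w i * (\<Sum>a<2^r. clifford_gen r i a a))"
    by (simp add: clifford_comb_def sum_distrib_left) (rule sum.swap)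
  also have "\<dots> = 0" using clifford_gen_trace by simp
  finally show ?thesis .
qed

lemma clifford_comb_anticommute:
  assumes "a < 2^r" "b < 2^r"
  shows "ranticomm (2^r) (clifford_comb r v) (clifford_comb r w) a b = 2 * (\<Sum>i<r. v i * w i) * rmat_id a b"
proof -
  have "rmat_mult (2^r) (clifford_comb r v) (clifford_comb r w) a b
      + rmat_mult (2^r) (clifford_comb r w) (clifford_comb r v) a b
      = (\<Sum>i<r. \<Sum>k<r. v i * w k * rmat_mult (2^r) (clifford_gen r i) (clifford_gen r k) a b)
          + (\<Sum>i<r. \<Sum>k<r. w i * v k * rmat_mult (2^r) (clifford_gen r i) (clifford_gen r k) a b)"
    unfolding clifford_comb_def by (simp only: rmat_mult_lincomb)
  also have "(\<Sum>i<r. \<Sum>k<r. w i * v k * rmat_mult (2^r) (clifford_gen r i) (clifford_gen r k) a b)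
      = (\<Sum>i<r. \<Sum>k<r. v i * w k * rmat_mult (2^r) (clifford_gen r k) (clifford_gen r i) a b)"
    by (subst sum.swap) (simp add: mult.commute)
  also have "(\<Sum>i<r. \<Sum>k<r. v i * w k * rmat_mult (2^r) (clifford_gen r i) (clifford_gen r k) a b) + \<dots>
      = (\<Sum>i<r. \<Sum>k<r. v i * w k * (rmat_mult (2^r) (clifford_gen r i) (clifford_gen r k) a b
          + rmat_mult (2^r) (clifford_gen r k) (clifford_gen r i) a b))"
    by (simp add: sum.distrib distrib_left)
  also have "\<dots> = (\<Sum>i<r. \<Sum>k<r. v i * w k * (if i = k then 2 * rmat_id a b else 0))"
    using clifford_gen_anticommute[unfolded ranticomm_def] assms by (intro sum.cong refl) simp
  also have "\<dots> = (\<Sum>i<r. v i * w i * (2 * rmat_id a b))"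
    by (intro sum.cong refl) (simp add: if_distrib cong: if_cong)
  also have "\<dots> = 2 * (\<Sum>i<r. v i * w i) * rmat_id a b"
    by (simp add: sum_distrib_left sum_distrib_right ac_simps)
  finally show ?thesis by (simp only: ranticomm_def)
qed

lemma rmat_mult_trace_commute: "(\<Sum>a<n. rmat_mult n X Y a a) = (\<Sum>a<n. rmat_mult n Y X a a)"
  unfolding rmat_mult_def by (subst sum.swap) (simp add: mult.commute)

lemma cquad_projection_nonneg:
  fixes P :: "nat \<Rightarrow> nat \<Rightarrow> real"
  assumes sym: "\<And>s t. s < n \<Longrightarrow> t < n \<Longrightarrow> P s t = P t s"
    and idem: "\<And>s t. s < n \<Longrightarrow> t < n \<Longrightarrow> rmat_mult n P P s t = P s t"
  shows "0 \<le> Re (cquad {..<n} (\<lambda>s t. complex_of_real (P s t)) v)"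
proof -
  define w where "w j = (\<Sum>t<n. complex_of_real (P j t) * v t)" for j
  have "cquad {..<n} (\<lambda>s t. complex_of_real (P s t)) v = (\<Sum>s<n. \<Sum>t<n. cnj (v s)
      * complex_of_real (rmat_mult n P P s t) * v t)"
    unfolding cquad_def using idem by (intro sum.cong refl) simp
  also have "\<dots> = (\<Sum>s<n. \<Sum>t<n. \<Sum>j<n. complex_of_real (P j s) * cnj (v s) * (complex_of_real (P j t) * v t))"
    unfolding rmat_mult_def using sym
    by (intro sum.cong refl) (simp add: sum_distrib_left sum_distrib_right mult.assoc mult.left_commute)
  also have "\<dots> = (\<Sum>j<n. \<Sum>s<n. \<Sum>t<n. complex_of_real (P j s) * cnj (v s) * (complex_of_real (P j t) * v t))"
    by (subst sum.swap, rule sum.cong[OF refl], rule sum.swap)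
  also have "\<dots> = (\<Sum>j<n. cnj (w j) * w j)"
    by (simp add: w_def sum_product cnj_sum)
  finally have "cquad {..<n} (\<lambda>s t. complex_of_real (P s t)) v = cinner {..<n} w w" by (simp add: cinner_def)
  then show ?thesis using Re_cinner_self_nonneg by simp
qed

lemma sum_diagonal: "(\<Sum>t\<in>I\<times>I. if fst t = snd t then g t else 0) = (\<Sum>k\<in>I. g (k,k))" if "finite I"
  using that by (simp add: sum.cartesian_product' if_distrib cong: if_cong)

lemma rmat_mult_comb_left: "rmat_mult n (\<lambda>s t. \<alpha> * X s t + \<beta> * Y s t) Z a b = \<alpha>
    * rmat_mult n X Z a b + \<beta> * rmat_mult n Y Z a b"
  by (simp add: rmat_mult_def sum.distrib sum_distrib_left distrib_right mult.assoc)
lemma rmat_mult_comb_right: "rmat_mult n Z (\<lambda>s t. \<alpha> * X s t + \<beta> * Y s t) a b = \<alpha>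
    * rmat_mult n Z X a b + \<beta> * rmat_mult n Z Y a b"
  by (simp add: rmat_mult_def sum.distrib sum_distrib_left distrib_left mult.left_commute)

definition maximally_entangled :: "nat \<Rightarrow> (nat \<times> nat) cmat" where
  "maximally_entangled n =
     (\<lambda>s t. if fst s = snd s \<and> fst t = snd t then complex_of_real (1 / real n) else 0)"

lemma cpsd_on_maximally_entangled: "cpsd_on ({..<n} \<times> {..<n}) (maximally_entangled n)"
  unfolding cpsd_on_cquad
proof
  let ?I2 = "{..<n} \<times> {..<n}"
  show "hermitian_on ?I2 (maximally_entangled n)" by (auto simp: hermitian_on_def maximally_entangled_def)
  show "\<forall>v. 0 \<le> Re (cquad ?I2 (maximally_entangled n) v)"
  proof
    fix v :: "nat \<times> nat \<Rightarrow> complex"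
    define S where "S = (\<Sum>t\<in>?I2. if fst t = snd t then v t else 0)"
    have "cquad ?I2 (maximally_entangled n) v = (\<Sum>s\<in>?I2. \<Sum>t\<in>?I2. complex_of_real (1 / real n) *
        ((if fst s = snd s then cnj (v s) else 0) * (if fst t = snd t then v t else 0)))"
      unfolding cquad_def maximally_entangled_def by (intro sum.cong refl) auto
    also have "\<dots> = complex_of_real (1 / real n) * (\<Sum>s\<in>?I2. \<Sum>t\<in>?I2.
        (if fst s = snd s then cnj (v s) else 0) * (if fst t = snd t then v t else 0))"
      by (simp only: sum_distrib_left)
    also have "(\<Sum>s\<in>?I2. \<Sum>t\<in>?I2. (if fst s = snd s then cnj (v s) else 0) * (if fst t = snd t then v t else 0))
        = (\<Sum>s\<in>?I2. if fst s = snd s then cnj (v s) else 0) * S"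
      unfolding S_def by (rule sum_product[symmetric])
    also have "(\<Sum>s\<in>?I2. if fst s = snd s then cnj (v s) else 0) = cnj S"
      unfolding S_def cnj_sum by (intro sum.cong refl) simp
    also have "cnj S * S = complex_of_real ((cmod S)\<^sup>2)" by (metis complex_norm_square mult.commute)
    finally show "0 \<le> Re (cquad ?I2 (maximally_entangled n) v)" by simp
  qed
qed

lemma ctrace_maximally_entangled:
  assumes "0 < n" shows "ctrace_on ({..<n} \<times> {..<n}) (maximally_entangled n) = 1"
proof -
  have "ctrace_on ({..<n} \<times> {..<n}) (maximally_entangled n)
      = (\<Sum>t\<in>{..<n} \<times> {..<n}. if fst t = snd t then complex_of_real (1 / real n) else 0)"
    unfolding ctrace_on_def maximally_entangled_def by (intro sum.cong refl) auto
  also have "\<dots> = (\<Sum>k<n. complex_of_real (1 / real n))" by (rule sum_diagonal) simp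
  finally show ?thesis using assms by simp
qed

lemma ctrace_tensor_maximally_entangled:
  "ctrace_on ({..<n} \<times> {..<n}) (cmult_on ({..<n} \<times> {..<n}) (tensor P Q) (maximally_entangled n))
    = complex_of_real (1 / real n) * (\<Sum>i<n. \<Sum>k<n. P i k * Q i k)"
proof -
  let ?I2 = "{..<n} \<times> {..<n}"
  have "ctrace_on ?I2 (cmult_on ?I2 (tensor P Q) (maximally_entangled n))
      = (\<Sum>s\<in>?I2. if fst s = snd s then (\<Sum>t\<in>?I2. if fst t = snd t then
          P (fst s) (fst t) * Q (snd s) (snd t) * complex_of_real (1 / real n) else 0) else 0)"
    unfolding ctrace_tensor_mult maximally_entangled_def by (auto intro!: sum.cong)
  also have "\<dots> = (\<Sum>i<n. \<Sum>k<n. P i k * Q i k * complex_of_real (1 / real n))"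
    by (simp add: sum_diagonal)
  finally show ?thesis by (simp add: sum_distrib_left mult.commute)
qed

text \<open>Real symmetric traceless observables whose anticommutators are \<open>2 C\<^sub>x\<^sub>y I\<close> realise \<open>p\<^sub>C\<close>
  on the maximally entangled state, with the projectors \<open>(I + a A\<^sub>x) / 2\<close> as measurements.\<close>

locale clifford_observables =
  fixes n :: nat and A :: "'n::finite \<Rightarrow> nat \<Rightarrow> nat \<Rightarrow> real" and C :: "real^'n^'n"
  assumes n_pos: "0 < n"
    and A_sym: "\<And>x s t. A x s t = A x t s"
    and A_trace: "\<And>x. (\<Sum>a<n. A x a a) = 0"
    and A_anticommute: "\<And>x y a b. a < n \<Longrightarrow> b < n \<Longrightarrow> ranticomm n (A x) (A y) a b = 2 * C$x$y * rmat_id a b"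
    and C_diag: "\<And>x. C$x$x = 1"
begin

definition projector :: "'n \<Rightarrow> int \<Rightarrow> nat \<Rightarrow> nat \<Rightarrow> real" where
  "projector x a = (\<lambda>s t. (1/2) * rmat_id s t + (real_of_int a / 2) * A x s t)"

lemma projector_sym: "projector x a s t = projector x a t s"
  by (simp add: projector_def A_sym rmat_id_def)

lemma projector_idem:
  assumes "a \<in> outcomes" "s < n" "t < n"
  shows "rmat_mult n (projector x a) (projector x a) s t = projector x a s t"
proof -
  have a2: "real_of_int a * (real_of_int a * z) = z" for z
    using assms(1) by (auto simp: outcomes_def)
  have Asq: "rmat_mult n (A x) (A x) s t = rmat_id s t"
    using A_anticommute[OF assms(2,3), of x x] C_diag[of x] by (simp add: ranticomm_def)
  have "rmat_mult n (projector x a) (projector x a) s t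
      = (1/2) * ((1/2) * rmat_mult n rmat_id rmat_id s t + (real_of_int a / 2) * rmat_mult n rmat_id (A x) s t)
      + (real_of_int a / 2) * ((1/2) * rmat_mult n (A x) rmat_id s t + (real_of_int a / 2) * rmat_mult n (A x) (A x) s t)"
    unfolding projector_def by (simp only: rmat_mult_comb_left rmat_mult_comb_right)
  also have "\<dots> = (1/2) * ((1/2) * rmat_id s t + (real_of_int a / 2) * A x s t)
      + (real_of_int a / 2) * ((1/2) * A x s t + (real_of_int a / 2) * rmat_id s t)"
    using assms Asq by (simp add: rmat_mult_id_left rmat_mult_id_right)
  also have "\<dots> = projector x a s t"
    by (simp add: projector_def algebra_simps a2)
  finally show ?thesis .
qed

definition measurement :: "'n \<Rightarrow> int \<Rightarrow> nat cmat" where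
  "measurement x a = (\<lambda>s t. complex_of_real (projector x a s t))"

lemma is_povm_measurement: "is_povm n (measurement x)"
  unfolding is_povm_def
proof
  show "\<forall>a\<in>outcomes. cpsd_on {..<n} (measurement x a)"
    unfolding cpsd_on_cquad
  proof (intro ballI conjI)
    show "hermitian_on {..<n} (measurement x a)" for a
      unfolding hermitian_on_def measurement_def by (simp add: projector_sym)
    show "\<forall>v. 0 \<le> Re (cquad {..<n} (measurement x a) v)" if "a \<in> outcomes" for a
      unfolding measurement_def
      by (intro allI cquad_projection_nonneg) (auto simp: projector_sym projector_idem that)
  qed
  show "\<forall>i<n. \<forall>j<n. (\<Sum>a\<in>outcomes. measurement x a i j) = cident i j"
    by (simp add: sum_outcomes measurement_def projector_def cident_def rmat_id_def)
qed

lemma trace_A_mult: "(\<Sum>i<n. \<Sum>k<n. A x i k * A y k i) = real n * C$x$y"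
proof -
  have "(\<Sum>i<n. \<Sum>k<n. A x i k * A y k i) = (\<Sum>i<n. rmat_mult n (A x) (A y) i i)"
    by (simp add: rmat_mult_def)
  moreover have "(\<Sum>i<n. rmat_mult n (A x) (A y) i i) + (\<Sum>i<n. rmat_mult n (A y) (A x) i i)
      = (\<Sum>i<n. 2 * C$x$y * rmat_id i i)"
    by (simp add: sum.distrib[symmetric] A_anticommute[unfolded ranticomm_def])
  moreover have "(\<Sum>i<n. rmat_mult n (A y) (A x) i i) = (\<Sum>i<n. rmat_mult n (A x) (A y) i i)"
    by (rule rmat_mult_trace_commute)
  ultimately show ?thesis by (simp add: rmat_id_def)
qed

lemma trace_projector_mult:
  "(\<Sum>i<n. \<Sum>k<n. projector x a i k * projector y b i k) = real n * (1 + real_of_int (a * b) * C$x$y) / 4"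
proof -
  have diag: "(\<Sum>i<n. \<Sum>k<n. rmat_id i k * f i k) = (\<Sum>i<n. f i i)" for f :: "nat \<Rightarrow> nat \<Rightarrow> real"
  proof -
    have "(\<Sum>i<n. \<Sum>k<n. rmat_id i k * f i k) = (\<Sum>i<n. \<Sum>k<n. if k = i then f i i else 0)"
      by (intro sum.cong refl) (simp add: rmat_id_def)
    then show ?thesis by simp
  qed
  have "projector x a i k * projector y b i k = (1/4) * (rmat_id i k * rmat_id i k)
      + (real_of_int b / 4) * (rmat_id i k * A y i k) + (real_of_int a / 4) * (rmat_id i k * A x i k)
      + (real_of_int (a * b) / 4) * (A x i k * A y k i)" for i k
    by (simp add: projector_def A_sym[of y i k] rmat_id_def algebra_simps)
  then have "(\<Sum>i<n. \<Sum>k<n. projector x a i k * projector y b i k)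
      = (1/4) * (\<Sum>i<n. \<Sum>k<n. rmat_id i k * rmat_id i k)
      + (real_of_int b / 4) * (\<Sum>i<n. \<Sum>k<n. rmat_id i k * A y i k)
      + (real_of_int a / 4) * (\<Sum>i<n. \<Sum>k<n. rmat_id i k * A x i k)
      + (real_of_int (a * b) / 4) * (\<Sum>i<n. \<Sum>k<n. A x i k * A y k i)"
    by (simp add: sum.distrib sum_distrib_left)
  also have "\<dots> = real n * (1 + real_of_int (a * b) * C$x$y) / 4"
    unfolding diag trace_A_mult by (simp add: A_trace rmat_id_def algebra_simps)
  finally show ?thesis .
qed

lemma has_qrep_maximally_entangled: "has_qrep n (p_C C)"
proof -
  have "complex_of_real (p_C C a b x y) = ctrace_on ({..<n} \<times> {..<n})
      (cmult_on ({..<n} \<times> {..<n}) (tensor (measurement x a) (measurement y b)) (maximally_entangled n))"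
    for a b x y
  proof -
    have "ctrace_on ({..<n} \<times> {..<n})
        (cmult_on ({..<n} \<times> {..<n}) (tensor (measurement x a) (measurement y b)) (maximally_entangled n))
      = complex_of_real ((1 / real n) * (\<Sum>i<n. \<Sum>k<n. projector x a i k * projector y b i k))"
      by (simp add: ctrace_tensor_maximally_entangled measurement_def)
    also have "(1 / real n) * (\<Sum>i<n. \<Sum>k<n. projector x a i k * projector y b i k) = p_C C a b x y"
      using n_pos by (simp add: trace_projector_mult p_C_def)
    finally show ?thesis by simp
  qed
  then show ?thesis
    unfolding has_qrep_def
    by (intro exI[of _ "maximally_entangled n"] exI[of _ measurement] conjI allI ballI
        cpsd_on_maximally_entangled ctrace_maximally_entangled n_pos is_povm_measurement)
qed

end

lemma has_qrep_p_C:
  fixes C :: "real^'n^'n"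
  assumes "C \<in> elliptope"
  shows "\<exists>d. has_qrep d (p_C C)"
proof -
  obtain r u where gram: "\<And>x y. C$x$y = (\<Sum>i<(r::nat). u x i * u y i)"
    using elliptope_gram_vectors[OF assms] by blast
  interpret clifford_observables "2 ^ r" "\<lambda>x. clifford_comb r (u x)" C
  proof
    show "clifford_comb r (u x) s t = clifford_comb r (u x) t s" for x s t by (rule clifford_comb_sym)
    show "(\<Sum>a<2 ^ r. clifford_comb r (u x) a a) = 0" for x by (rule clifford_comb_trace)
    show "ranticomm (2 ^ r) (clifford_comb r (u x)) (clifford_comb r (u y)) a b = 2 * C$x$y * rmat_id a b"
      if "a < 2 ^ r" "b < 2 ^ r" for x y a b
      using clifford_comb_anticommute[OF that, of "u x" "u y"] by (simp add: gram)
    show "C$x$x = 1" for x using assms by (simp add: elliptope_def)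
  qed simp
  show ?thesis using has_qrep_maximally_entangled by blast
qed

lemma sqrt2_pow_le_of_four_pow_le:
  assumes "4 ^ m \<le> q ^ 4"
  shows "sqrt 2 ^ m \<le> real q"
proof -
  have "(sqrt 2 ^ m) ^ 4 = (sqrt 2 ^ 4) ^ m" by (simp flip: power_mult add: mult.commute)
  also have "sqrt 2 ^ 4 = (4::real)" by (simp add: power4_eq_xxxx mult.assoc[symmetric])
  finally have le: "(sqrt 2 ^ m) ^ 4 \<le> real q ^ 4"
    using assms by (metis of_nat_le_iff of_nat_numeral of_nat_power)
  show ?thesis by (rule power_le_imp_le_base[of _ 3]) (use le in \<open>simp_all add: numeral_eq_Suc\<close>)
qed

theorem theorem5p14:
  fixes C :: "real^'n^'n"
  assumes "C extreme_point_of elliptope"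
    and "rank C = r_max CARD('n)"
  shows "sqrt 2 ^ (r_max CARD('n) div 2) \<le> real (qdim (p_C C))"
proof -
  have "C \<in> elliptope" using assms(1) by (simp add: extreme_point_of_def)
  then obtain d where "has_qrep d (p_C C)" using has_qrep_p_C by blast
  then have "has_qrep (qdim (p_C C)) (p_C C)" unfolding qdim_def by (rule LeastI)
  then have "4 ^ (rank C div 2) \<le> qdim (p_C C) ^ 4"
    using has_qrep_four_pow_rank_le assms(1) by blast
  then show ?thesis using assms(2) sqrt2_pow_le_of_four_pow_le by simp
qed

end
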